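(* Let $\mathcal{G}=(S,\mathcal{F},\mathcal{L})$ be a $p$-local compact group, and let $\mathcal{P}=\{P_0=S,P_1,\dots,P_k\}$ be a complete fusion controlling family for $\mathcal{F}$. Then for each $\Psi\in\mathrm{Aut}^I_{\mathrm{typ}}(\mathcal{L})$, the collection $\Psi(\mathcal{P})=\{\Psi(P_0),\dots,\Psi(P_k)\}$ is a complete fusion controlling family. Furthermore, there is a group homomorphism $\upsilon\colon\mathrm{Out}_{\mathrm{typ}}(\mathcal{L})\to\Sigma_k$ defined by the relation $P_{\upsilon(\Psi)(i)}\in\Psi(P_i)^{N_{\mathcal{F}}(S)}$ for $1\le i\le k$.
   Context: A $p$-local compact group $(S,\mathcal{F},\mathcal{L})$ (Broto–Levi–Oliver): $S$ a discrete $p$-toral group, $\mathcal{F}$ a saturated fusion system over $S$, $\mathcal{L}$ its centric linking system with objects the $\mathcal{F}$-centric subgroups and structure functor $\delta$ from the transporter category of $S$; $\iota_{P,Q}=\delta_{P,Q}(1)$ for $P\le Q$. $\mathrm{Aut}^I_{\mathrm{typ}}(\mathcal{L})$ is the group of isotypical self equivalences of $\mathcal{L}$ (self equivalences restricting to an equivalence on the image of $\delta$) with $\Psi(\iota_{P,Q})=\iota_{\Psi(P),\Psi(Q)}$; $\mathrm{Out}_{\mathrm{typ}}(\mathcal{L})$ is the group of isotypical self equivalences modulo natural isomorphism, the quotient of $\mathrm{Aut}^I_{\mathrm{typ}}(\mathcal{L})$ by conjugation by $\mathrm{Aut}_{\mathcal{L}}(S)$. $N_{\mathcal{F}}(S)$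 is the fusion subsystem over $S$ generated by restrictions of elements of $\mathrm{Aut}_{\mathcal{F}}(S)$, and $Q^{N_{\mathcal{F}}(S)}$ denotes the set of $N_{\mathcal{F}}(S)$-conjugates of $Q$. A fusion controlling family is a finite set $\{P_0=S,\dots,P_k\}$ of fully $\mathcal{F}$-normalised subgroups ($N_S(P)$ of maximal order among $\mathcal{F}$-conjugates) containing at least one representative of each $\mathcal{F}$-conjugacy class of $\mathcal{F}$-centric $\mathcal{F}$-radical subgroups; it is complete if it consists of exactly one representative of each $N_{\mathcal{F}}(S)$-conjugacy class of $\mathcal{F}$-centric $\mathcal{F}$-radical subgroups ($\mathcal{F}$-radical: $\mathrm{Aut}_{\mathcal{F}}(P)/\mathrm{Inn}(P)$ has no nontrivial normal $p$-subgroup). $\Sigma_k$ is the symmetric group on $\{1,\dots,k\}$. *)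

theory Defs
  imports Complex_Main "HOL-Computational_Algebra.Primes" "HOL-Algebra.Coset" "HOL-Algebra.Sym_Groups"
begin

text \<open>The Pruefer group Z/p^infinity realised as p-power-denominator rationals in [0,1) under
addition mod 1; the discrete p-torus (Z/p^infinity)^r as r-tuples (coordinates >= r are 0).\<close>

definition prufer_torus :: "nat \<Rightarrow> nat \<Rightarrow> (nat \<Rightarrow> rat) monoid" where
  "prufer_torus p r = \<lparr> carrier = {x. (\<forall>i. r \<le> i \<longrightarrow> x i = 0) \<and>
        (\<forall>i<r. 0 \<le> x i \<and> x i < 1 \<and> (\<exists>n::nat. x i * of_nat p ^ n \<in> \<int>))},
      mult = (\<lambda>x y i. frac (x i + y i)), one = (\<lambda>i. 0) \<rparr>"

definition discrete_p_toral :: "nat \<Rightarrow> 'g monoid \<Rightarrow> bool" where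
  "discrete_p_toral p S \<longleftrightarrow> prime p \<and> group S \<and>
     (\<exists>T r. normal T S \<and> (S\<lparr>carrier := T\<rparr> \<cong> prufer_torus p r) \<and>
        finite (rcosets\<^bsub>S\<^esub> T) \<and> (\<exists>m. card (rcosets\<^bsub>S\<^esub> T) = p ^ m))"

text \<open>Identity component (maximal divisible subgroup), rank, and the "order"
 |P| = (rk P, |P/P_0|) ordered lexicographically.\<close>

definition divisible_sub :: "'g monoid \<Rightarrow> 'g set \<Rightarrow> bool" where
  "divisible_sub S H \<longleftrightarrow> (\<forall>x\<in>H. \<forall>n::nat. n > 0 \<longrightarrow> (\<exists>y\<in>H. y [^]\<^bsub>S\<^esub> n = x))"

definition ident_comp :: "'g monoid \<Rightarrow> 'g set \<Rightarrow> 'g set" where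
  "ident_comp S P = \<Union>{H. subgroup H S \<and> H \<subseteq> P \<and> divisible_sub S H}"

definition ptrank :: "nat \<Rightarrow> 'g monoid \<Rightarrow> 'g set \<Rightarrow> nat" where
  "ptrank p S P = (THE r. S\<lparr>carrier := ident_comp S P\<rparr> \<cong> prufer_torus p r)"

definition ptord :: "nat \<Rightarrow> 'g monoid \<Rightarrow> 'g set \<Rightarrow> nat \<times> nat" where
  "ptord p S P = (ptrank p S P, card (rcosets\<^bsub>S\<lparr>carrier := P\<rparr>\<^esub> (ident_comp S P)))"

definition ptord_le :: "nat \<times> nat \<Rightarrow> nat \<times> nat \<Rightarrow> bool" where
  "ptord_le a b \<longleftrightarrow> fst a < fst b \<or> (fst a = fst b \<and> snd a \<le> snd b)"

definition conjm :: "'g monoid \<Rightarrow> 'g \<Rightarrow> 'g \<Rightarrow> 'g" where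
  "conjm S g = (\<lambda>x. g \<otimes>\<^bsub>S\<^esub> x \<otimes>\<^bsub>S\<^esub> inv\<^bsub>S\<^esub> g)"

definition transp :: "'g monoid \<Rightarrow> 'g set \<Rightarrow> 'g set \<Rightarrow> 'g set" where
  "transp S P Q = {g \<in> carrier S. conjm S g ` P \<subseteq> Q}"

definition nrm :: "'g monoid \<Rightarrow> 'g set \<Rightarrow> 'g set" where
  "nrm S P = {g \<in> carrier S. conjm S g ` P = P}"

definition cent :: "'g monoid \<Rightarrow> 'g set \<Rightarrow> 'g set" where
  "cent S P = {g \<in> carrier S. \<forall>x\<in>P. g \<otimes>\<^bsub>S\<^esub> x = x \<otimes>\<^bsub>S\<^esub> g}"

definition homS :: "'g monoid \<Rightarrow> 'g set \<Rightarrow> 'g set \<Rightarrow> ('g \<Rightarrow> 'g) set" where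
  "homS S P Q = {restrict (conjm S g) P | g. g \<in> transp S P Q}"

definition injhom :: "'g monoid \<Rightarrow> 'g set \<Rightarrow> 'g set \<Rightarrow> ('g \<Rightarrow> 'g) set" where
  "injhom S P Q = {\<phi>. \<phi> \<in> extensional P \<and> \<phi> \<in> hom (S\<lparr>carrier := P\<rparr>) (S\<lparr>carrier := Q\<rparr>) \<and> inj_on \<phi> P}"

section \<open>Fusion systems\<close>

text \<open>A fusion system F over S: Hom_F(P,Q) = F P Q, morphisms are functions restricted to P.\<close>

definition fusion_system :: "'g monoid \<Rightarrow> ('g set \<Rightarrow> 'g set \<Rightarrow> ('g \<Rightarrow> 'g) set) \<Rightarrow> bool" where
  "fusion_system S F \<longleftrightarrow>
    (\<forall>P Q R. subgroup P S \<longrightarrow> subgroup Q S \<longrightarrow> subgroup R S \<longrightarrow>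
       homS S P Q \<subseteq> F P Q \<and> F P Q \<subseteq> injhom S P Q \<and>
       (\<forall>\<phi>\<in>F P Q. \<forall>\<psi>\<in>F Q R. restrict (\<psi> \<circ> \<phi>) P \<in> F P R) \<and>
       (\<forall>\<phi>\<in>F P Q. \<phi> \<in> F P (\<phi> ` P) \<and> restrict (inv_into P \<phi>) (\<phi> ` P) \<in> F (\<phi> ` P) P))"

definition fconj :: "'g monoid \<Rightarrow> ('g set \<Rightarrow> 'g set \<Rightarrow> ('g \<Rightarrow> 'g) set) \<Rightarrow> 'g set \<Rightarrow> 'g set set" where
  "fconj S F P = {\<phi> ` P | \<phi>. \<phi> \<in> F P (carrier S)}"

definition fully_normalized :: "nat \<Rightarrow> 'g monoid \<Rightarrow> ('g set \<Rightarrow> 'g set \<Rightarrow> ('g \<Rightarrow> 'g) set) \<Rightarrow> 'g set \<Rightarrow> bool" where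
  "fully_normalized p S F P \<longleftrightarrow> subgroup P S \<and>
     (\<forall>Q\<in>fconj S F P. ptord_le (ptord p S (nrm S Q)) (ptord p S (nrm S P)))"

definition fully_centralized :: "nat \<Rightarrow> 'g monoid \<Rightarrow> ('g set \<Rightarrow> 'g set \<Rightarrow> ('g \<Rightarrow> 'g) set) \<Rightarrow> 'g set \<Rightarrow> bool" where
  "fully_centralized p S F P \<longleftrightarrow> subgroup P S \<and>
     (\<forall>Q\<in>fconj S F P. ptord_le (ptord p S (cent S Q)) (ptord p S (cent S P)))"

definition autF_grp :: "'g monoid \<Rightarrow> ('g set \<Rightarrow> 'g set \<Rightarrow> ('g \<Rightarrow> 'g) set) \<Rightarrow> 'g set \<Rightarrow> ('g \<Rightarrow> 'g) monoid" where
  "autF_grp S F P = \<lparr> carrier = F P P, mult = (\<lambda>a b. restrict (a \<circ> b) P), one = restrict id P \<rparr>"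

definition inn :: "'g monoid \<Rightarrow> 'g set \<Rightarrow> ('g \<Rightarrow> 'g) set" where
  "inn S P = {restrict (conjm S g) P | g. g \<in> P}"

definition outF :: "'g monoid \<Rightarrow> ('g set \<Rightarrow> 'g set \<Rightarrow> ('g \<Rightarrow> 'g) set) \<Rightarrow> 'g set \<Rightarrow> ('g \<Rightarrow> 'g) set monoid" where
  "outF S F P = autF_grp S F P Mod inn S P"

definition outS :: "'g monoid \<Rightarrow> ('g set \<Rightarrow> 'g set \<Rightarrow> ('g \<Rightarrow> 'g) set) \<Rightarrow> 'g set \<Rightarrow> ('g \<Rightarrow> 'g) set set" where
  "outS S F P = (\<lambda>a. inn S P #>\<^bsub>autF_grp S F P\<^esub> a) ` {restrict (conjm S g) P | g. g \<in> nrm S P}"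

definition sylow_sub :: "nat \<Rightarrow> ('a, 'b) monoid_scheme \<Rightarrow> 'a set \<Rightarrow> bool" where
  "sylow_sub p G H \<longleftrightarrow> subgroup H G \<and> finite (carrier G) \<and>
     (\<exists>a. card H = p ^ a \<and> p ^ a dvd order G \<and> \<not> p ^ Suc a dvd order G)"

definition N_phi :: "'g monoid \<Rightarrow> 'g set \<Rightarrow> ('g \<Rightarrow> 'g) \<Rightarrow> 'g set" where
  "N_phi S P \<phi> = {g \<in> nrm S P. \<exists>h\<in>nrm S (\<phi> ` P).
      restrict (\<phi> \<circ> conjm S g \<circ> inv_into P \<phi>) (\<phi> ` P) = restrict (conjm S h) (\<phi> ` P)}"

definition saturated :: "nat \<Rightarrow> 'g monoid \<Rightarrow> ('g set \<Rightarrow> 'g set \<Rightarrow> ('g \<Rightarrow> 'g) set) \<Rightarrow> bool" where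
  "saturated p S F \<longleftrightarrow> fusion_system S F \<and>
    \<comment> \<open>(I)\<close>
    (\<forall>P. fully_normalized p S F P \<longrightarrow> fully_centralized p S F P \<and>
        finite (carrier (outF S F P)) \<and> sylow_sub p (outF S F P) (outS S F P)) \<and>
    \<comment> \<open>(II)\<close>
    (\<forall>P \<phi>. subgroup P S \<longrightarrow> \<phi> \<in> F P (carrier S) \<longrightarrow> fully_centralized p S F (\<phi> ` P) \<longrightarrow>
        (\<exists>\<psi>\<in>F (N_phi S P \<phi>) (carrier S). \<forall>x\<in>P. \<psi> x = \<phi> x)) \<and>
    \<comment> \<open>(III) continuity\<close>
    (\<forall>Pn :: nat \<Rightarrow> 'g set. (\<forall>n. subgroup (Pn n) S \<and> Pn n \<subseteq> Pn (Suc n)) \<longrightarrow>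
       (\<forall>\<phi>. \<phi> \<in> extensional (\<Union>n. Pn n) \<longrightarrow> \<phi> \<in> hom (S\<lparr>carrier := \<Union>n. Pn n\<rparr>) S \<longrightarrow>
            (\<forall>n. restrict \<phi> (Pn n) \<in> F (Pn n) (carrier S)) \<longrightarrow> \<phi> \<in> F (\<Union>n. Pn n) (carrier S)))"

definition F_centric :: "'g monoid \<Rightarrow> ('g set \<Rightarrow> 'g set \<Rightarrow> ('g \<Rightarrow> 'g) set) \<Rightarrow> 'g set \<Rightarrow> bool" where
  "F_centric S F P \<longleftrightarrow> subgroup P S \<and> (\<forall>Q\<in>fconj S F P. cent S Q \<subseteq> Q)"

definition F_radical :: "nat \<Rightarrow> 'g monoid \<Rightarrow> ('g set \<Rightarrow> 'g set \<Rightarrow> ('g \<Rightarrow> 'g) set) \<Rightarrow> 'g set \<Rightarrow> bool" where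
  "F_radical p S F P \<longleftrightarrow> subgroup P S \<and>
     (\<forall>H. normal H (outF S F P) \<longrightarrow> finite H \<longrightarrow> (\<exists>n. card H = p ^ n) \<longrightarrow>
          H = {\<one>\<^bsub>outF S F P\<^esub>})"

section \<open>Centric linking systems\<close>

record ('g, 'm) lsys =
  L_mor :: "'g set \<Rightarrow> 'g set \<Rightarrow> 'm set"
  L_cmp :: "'g set \<Rightarrow> 'g set \<Rightarrow> 'g set \<Rightarrow> 'm \<Rightarrow> 'm \<Rightarrow> 'm"  \<comment> \<open>L_cmp P Q R g f = g o f\<close>
  L_id  :: "'g set \<Rightarrow> 'm"
  L_dlt :: "'g set \<Rightarrow> 'g set \<Rightarrow> 'g \<Rightarrow> 'm"
  L_prj :: "'g set \<Rightarrow> 'g set \<Rightarrow> 'm \<Rightarrow> 'g \<Rightarrow> 'g"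

definition L_ob :: "'g monoid \<Rightarrow> ('g set \<Rightarrow> 'g set \<Rightarrow> ('g \<Rightarrow> 'g) set) \<Rightarrow> 'g set set" where
  "L_ob S F = {P. F_centric S F P}"

definition is_cat :: "'g set set \<Rightarrow> ('g, 'm) lsys \<Rightarrow> bool" where
  "is_cat Ob L \<longleftrightarrow> (\<forall>P\<in>Ob. \<forall>Q\<in>Ob. \<forall>R\<in>Ob. \<forall>T\<in>Ob.
      L_id L P \<in> L_mor L P P \<and>
      (\<forall>f\<in>L_mor L P Q. L_cmp L P Q Q (L_id L Q) f = f \<and> L_cmp L P P Q f (L_id L P) = f) \<and>
      (\<forall>f\<in>L_mor L P Q. \<forall>g\<in>L_mor L Q R. L_cmp L P Q R g f \<in> L_mor L P R) \<and>
      (\<forall>f\<in>L_mor L P Q. \<forall>g\<in>L_mor L Q R. \<forall>h\<in>L_mor L R T.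
          L_cmp L P R T h (L_cmp L P Q R g f) = L_cmp L P Q T (L_cmp L Q R T h g) f))"

definition linking_system :: "'g monoid \<Rightarrow> ('g set \<Rightarrow> 'g set \<Rightarrow> ('g \<Rightarrow> 'g) set) \<Rightarrow> ('g, 'm) lsys \<Rightarrow> bool" where
  "linking_system S F L \<longleftrightarrow> is_cat (L_ob S F) L \<and>
    (\<forall>P\<in>L_ob S F. \<forall>Q\<in>L_ob S F. \<forall>R\<in>L_ob S F.
      \<comment> \<open>delta is a functor from the transporter category\<close>
      (\<forall>g\<in>transp S P Q. L_dlt L P Q g \<in> L_mor L P Q) \<and>
      L_dlt L P P \<one>\<^bsub>S\<^esub> = L_id L P \<and>
      (\<forall>g\<in>transp S P Q. \<forall>h\<in>transp S Q R.
          L_dlt L P R (h \<otimes>\<^bsub>S\<^esub> g) = L_cmp L P Q R (L_dlt L Q R h) (L_dlt L P Q g)) \<and>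
      \<comment> \<open>pi is a functor to F\<close>
      (\<forall>f\<in>L_mor L P Q. L_prj L P Q f \<in> F P Q) \<and>
      L_prj L P P (L_id L P) = restrict id P \<and>
      (\<forall>f\<in>L_mor L P Q. \<forall>g\<in>L_mor L Q R.
          L_prj L P R (L_cmp L P Q R g f) = restrict (L_prj L Q R g \<circ> L_prj L P Q f) P) \<and>
      \<comment> \<open>(A)\<close>
      (\<forall>f\<in>L_mor L P Q. \<forall>z\<in>P \<inter> cent S P.
          L_cmp L P P Q f (L_dlt L P P z) = f \<longrightarrow> z = \<one>\<^bsub>S\<^esub>) \<and>
      L_prj L P Q ` L_mor L P Q = F P Q \<and>
      (\<forall>f\<in>L_mor L P Q. \<forall>f'\<in>L_mor L P Q.
          L_prj L P Q f = L_prj L P Q f' \<longleftrightarrow> (\<exists>z\<in>P \<inter> cent S P. f' = L_cmp L P P Q f (L_dlt L P P z))) \<and>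
      \<comment> \<open>(B)\<close>
      (\<forall>g\<in>transp S P Q. L_prj L P Q (L_dlt L P Q g) = restrict (conjm S g) P) \<and>
      \<comment> \<open>(C)\<close>
      (\<forall>f\<in>L_mor L P Q. \<forall>g\<in>P.
          L_cmp L P P Q f (L_dlt L P P g) = L_cmp L P Q Q (L_dlt L Q Q (L_prj L P Q f g)) f))"

definition p_local_compact_group :: "nat \<Rightarrow> 'g monoid \<Rightarrow> ('g set \<Rightarrow> 'g set \<Rightarrow> ('g \<Rightarrow> 'g) set) \<Rightarrow> ('g, 'm) lsys \<Rightarrow> bool" where
  "p_local_compact_group p S F L \<longleftrightarrow> discrete_p_toral p S \<and> saturated p S F \<and> linking_system S F L"

section \<open>Self equivalences of L\<close>

type_synonym ('g, 'm) fnctr = "('g set \<Rightarrow> 'g set) \<times> ('g set \<Rightarrow> 'g set \<Rightarrow> 'm \<Rightarrow> 'm)"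

definition L_iso :: "('g, 'm) lsys \<Rightarrow> 'g set \<Rightarrow> 'g set \<Rightarrow> 'm \<Rightarrow> bool" where
  "L_iso L P Q f \<longleftrightarrow> f \<in> L_mor L P Q \<and>
     (\<exists>g\<in>L_mor L Q P. L_cmp L P Q P g f = L_id L P \<and> L_cmp L Q P Q f g = L_id L Q)"

definition is_functor :: "'g set set \<Rightarrow> ('g, 'm) lsys \<Rightarrow> ('g, 'm) fnctr \<Rightarrow> bool" where
  "is_functor Ob L \<Psi> \<longleftrightarrow> (\<forall>P\<in>Ob. fst \<Psi> P \<in> Ob) \<and>
     (\<forall>P\<in>Ob. \<forall>Q\<in>Ob. \<forall>R\<in>Ob.
        snd \<Psi> P P (L_id L P) = L_id L (fst \<Psi> P) \<and>
        (\<forall>f\<in>L_mor L P Q. snd \<Psi> P Q f \<in> L_mor L (fst \<Psi> P) (fst \<Psi> Q)) \<and>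
        (\<forall>f\<in>L_mor L P Q. \<forall>g\<in>L_mor L Q R.
           snd \<Psi> P R (L_cmp L P Q R g f) =
           L_cmp L (fst \<Psi> P) (fst \<Psi> Q) (fst \<Psi> R) (snd \<Psi> Q R g) (snd \<Psi> P Q f)))"

definition self_equivalence :: "'g set set \<Rightarrow> ('g, 'm) lsys \<Rightarrow> ('g, 'm) fnctr \<Rightarrow> bool" where
  "self_equivalence Ob L \<Psi> \<longleftrightarrow> is_functor Ob L \<Psi> \<and>
     (\<forall>P\<in>Ob. \<forall>Q\<in>Ob. bij_betw (snd \<Psi> P Q) (L_mor L P Q) (L_mor L (fst \<Psi> P) (fst \<Psi> Q))) \<and>
     (\<forall>Q\<in>Ob. \<exists>P\<in>Ob. \<exists>f. L_iso L (fst \<Psi> P) Q f)"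

definition AutI_typ :: "'g monoid \<Rightarrow> ('g set \<Rightarrow> 'g set \<Rightarrow> ('g \<Rightarrow> 'g) set) \<Rightarrow> ('g, 'm) lsys \<Rightarrow> ('g, 'm) fnctr set" where
  "AutI_typ S F L = {\<Psi>. self_equivalence (L_ob S F) L \<Psi> \<and>
     \<comment> \<open>isotypical\<close>
     (\<forall>P\<in>L_ob S F. snd \<Psi> P P ` (L_dlt L P P ` P) = L_dlt L (fst \<Psi> P) (fst \<Psi> P) ` (fst \<Psi> P)) \<and>
     \<comment> \<open>sends inclusions to inclusions\<close>
     (\<forall>P\<in>L_ob S F. \<forall>Q\<in>L_ob S F. P \<subseteq> Q \<longrightarrow>
        snd \<Psi> P Q (L_dlt L P Q \<one>\<^bsub>S\<^esub>) = L_dlt L (fst \<Psi> P) (fst \<Psi> Q) \<one>\<^bsub>S\<^esub>)}"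

definition nat_iso :: "'g set set \<Rightarrow> ('g, 'm) lsys \<Rightarrow> ('g, 'm) fnctr \<Rightarrow> ('g, 'm) fnctr \<Rightarrow> bool" where
  "nat_iso Ob L \<Psi> \<Phi> \<longleftrightarrow> (\<exists>\<eta>. (\<forall>P\<in>Ob. L_iso L (fst \<Psi> P) (fst \<Phi> P) (\<eta> P)) \<and>
     (\<forall>P\<in>Ob. \<forall>Q\<in>Ob. \<forall>f\<in>L_mor L P Q.
        L_cmp L (fst \<Psi> P) (fst \<Psi> Q) (fst \<Phi> Q) (\<eta> Q) (snd \<Psi> P Q f) =
        L_cmp L (fst \<Psi> P) (fst \<Phi> P) (fst \<Phi> Q) (snd \<Phi> P Q f) (\<eta> P)))"

definition fcomp :: "('g, 'm) fnctr \<Rightarrow> ('g, 'm) fnctr \<Rightarrow> ('g, 'm) fnctr" where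
  "fcomp \<Psi> \<Phi> = (fst \<Psi> \<circ> fst \<Phi>, (\<lambda>P Q f. snd \<Psi> (fst \<Phi> P) (fst \<Phi> Q) (snd \<Phi> P Q f)))"

definition fid :: "('g, 'm) fnctr" where
  "fid = (id, (\<lambda>P Q f. f))"

definition out_class :: "'g monoid \<Rightarrow> ('g set \<Rightarrow> 'g set \<Rightarrow> ('g \<Rightarrow> 'g) set) \<Rightarrow> ('g, 'm) lsys \<Rightarrow> ('g, 'm) fnctr \<Rightarrow> ('g, 'm) fnctr set" where
  "out_class S F L \<Psi> = {\<Theta>\<in>AutI_typ S F L. nat_iso (L_ob S F) L \<Theta> \<Psi>}"

definition Out_typ :: "'g monoid \<Rightarrow> ('g set \<Rightarrow> 'g set \<Rightarrow> ('g \<Rightarrow> 'g) set) \<Rightarrow> ('g, 'm) lsys \<Rightarrow> ('g, 'm) fnctr set monoid" where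
  "Out_typ S F L = \<lparr> carrier = out_class S F L ` AutI_typ S F L,
     mult = (\<lambda>A B. {\<Theta>\<in>AutI_typ S F L. \<exists>\<Psi>\<in>A. \<exists>\<Phi>\<in>B. nat_iso (L_ob S F) L \<Theta> (fcomp \<Psi> \<Phi>)}),
     one = out_class S F L fid \<rparr>"

text \<open>Morphisms of the fusion subsystem N_F(S) generated by restrictions of elements of
 Aut_F(S) (closure under composition; codomains may be enlarged).\<close>

inductive nfs_hom :: "'g monoid \<Rightarrow> ('g set \<Rightarrow> 'g set \<Rightarrow> ('g \<Rightarrow> 'g) set) \<Rightarrow> 'g set \<Rightarrow> 'g set \<Rightarrow> ('g \<Rightarrow> 'g) \<Rightarrow> bool"
  for S F where
  restr: "\<alpha> \<in> F (carrier S) (carrier S) \<Longrightarrow> subgroup Q S \<Longrightarrow> subgroup R S \<Longrightarrow> \<alpha> ` Q \<subseteq> R \<Longrightarrow>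
            nfs_hom S F Q R (restrict \<alpha> Q)"
| comp: "nfs_hom S F Q R \<phi> \<Longrightarrow> nfs_hom S F R T \<psi> \<Longrightarrow> nfs_hom S F Q T (restrict (\<psi> \<circ> \<phi>) Q)"

definition nfs_conj :: "'g monoid \<Rightarrow> ('g set \<Rightarrow> 'g set \<Rightarrow> ('g \<Rightarrow> 'g) set) \<Rightarrow> 'g set \<Rightarrow> 'g set set" where
  "nfs_conj S F Q = {\<phi> ` Q | \<phi>. nfs_hom S F Q (carrier S) \<phi>}"

definition fusion_controlling_family :: "nat \<Rightarrow> 'g monoid \<Rightarrow> ('g set \<Rightarrow> 'g set \<Rightarrow> ('g \<Rightarrow> 'g) set) \<Rightarrow> (nat \<Rightarrow> 'g set) \<Rightarrow> nat \<Rightarrow> bool" where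
  "fusion_controlling_family p S F P k \<longleftrightarrow> P 0 = carrier S \<and>
     (\<forall>i\<le>k. fully_normalized p S F (P i)) \<and>
     (\<forall>Q. F_centric S F Q \<and> F_radical p S F Q \<longrightarrow> (\<exists>i\<le>k. P i \<in> fconj S F Q))"

definition complete_fcf :: "nat \<Rightarrow> 'g monoid \<Rightarrow> ('g set \<Rightarrow> 'g set \<Rightarrow> ('g \<Rightarrow> 'g) set) \<Rightarrow> (nat \<Rightarrow> 'g set) \<Rightarrow> nat \<Rightarrow> bool" where
  "complete_fcf p S F P k \<longleftrightarrow> fusion_controlling_family p S F P k \<and>
     (\<forall>i\<le>k. F_centric S F (P i) \<and> F_radical p S F (P i)) \<and>
     (\<forall>i\<le>k. \<forall>j\<le>k. P j \<in> nfs_conj S F (P i) \<longrightarrow> i = j) \<and>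
     (\<forall>Q. F_centric S F Q \<and> F_radical p S F Q \<longrightarrow> (\<exists>i\<le>k. P i \<in> nfs_conj S F Q))"

end

theory Submission
  imports Defs "HOL-Algebra.Multiplicative_Group"
begin

text \<open>An isotypical self equivalence \<Psi> of L restricts on \<delta>(S) to an automorphism \<alpha> of S; this
  uses that elements of Aut_F(S) are onto, which holds because S is torsion and Out_F(S) is finite.
  Isotypicality and the preservation of inclusions give \<Psi>(P) = \<alpha>(P) for every F-centric P, and
  comparing axiom (C) of the linking system before and after applying \<Psi> shows that conjugation by
  \<alpha> carries F(P, Q) onto F(\<alpha>P, \<alpha>Q). Hence \<alpha> and its inverse preserve being fully normalised,
  centric, radical and N_F(S)-conjugate, so \<Psi>(P_0), ..., \<Psi>(P_k) is again a complete fusion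
  controlling family, and \<upsilon>(\<Psi>)(i) is the unique j with P_j N_F(S)-conjugate to \<Psi>(P_i). A natural
  isomorphism \<Theta> \<Rightarrow> \<Psi> has a component at S projecting to an element of Aut_F(S) carrying \<Theta>(P)
  onto \<Psi>(P), so \<upsilon> is well defined on Out_typ(L); it is multiplicative because \<alpha> transports
  N_F(S)-conjugacy.\<close>

section \<open>Discrete p-toral groups are torsion\<close>

lemma rat_frac_double_fixed_zero:
  fixes a :: rat
  assumes "0 \<le> a" "a < 1" "a = frac (a + a)"
  shows "a = 0"
proof -
  have "(a + a) - a \<in> \<int>" using assms(3) by (metis frac_unique_iff)
  then have "a \<in> \<int>" by simp
  then show ?thesis using assms(1,2) by (metis frac_eq frac_eq_0_iff)
qed

lemma prufer_torus_nat_pow: "x [^]\<^bsub>prufer_torus p r\<^esub> (n::nat) = (\<lambda>i. frac (of_nat n * x i))"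
  by (induction n) (simp_all add: prufer_torus_def algebra_simps)

lemma prufer_torus_torsion:
  assumes x: "x \<in> carrier (prufer_torus p r)" and p: "prime p"
  shows "\<exists>N>0. x [^]\<^bsub>prufer_torus p r\<^esub> (N::nat) = \<one>\<^bsub>prufer_torus p r\<^esub>"
proof -
  obtain e where e: "\<And>i. i < r \<Longrightarrow> x i * of_nat p ^ e i \<in> \<int>"
    using x unfolding prufer_torus_def by simp metis
  define N where "N = (\<Prod>i<r. p ^ e i)"
  have "N > 0" using p unfolding N_def by (simp add: prime_gt_0_nat)
  moreover have "frac (of_nat N * x i) = 0" for i
  proof (cases "i < r")
    case True
    have "p ^ e i dvd N" unfolding N_def using True by (intro dvd_prodI) auto
    then obtain c where c: "N = p ^ e i * c" by (auto elim: dvdE)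
    have "of_nat N * x i = of_nat c * (x i * of_nat p ^ e i)" by (simp add: c algebra_simps)
    also have "\<dots> \<in> \<int>" using e[OF True] Ints_of_nat by (rule Ints_mult[rotated])
    finally show ?thesis by simp
  next
    case False
    then show ?thesis using x by (simp add: prufer_torus_def)
  qed
  moreover have "x [^]\<^bsub>prufer_torus p r\<^esub> N = \<one>\<^bsub>prufer_torus p r\<^esub>"
    by (simp only: prufer_torus_nat_pow)
      (simp add: prufer_torus_def fun_eq_iff \<open>\<And>i. frac (of_nat N * x i) = 0\<close>)
  ultimately show ?thesis by blast
qed

lemma prufer_hom_one:
  assumes G: "group G" and \<phi>: "\<phi> \<in> hom G (prufer_torus p r)"
  shows "\<phi> \<one>\<^bsub>G\<^esub> = \<one>\<^bsub>prufer_torus p r\<^esub>"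
proof -
  let ?e = "\<phi> \<one>\<^bsub>G\<^esub>"
  have o: "\<one>\<^bsub>G\<^esub> \<in> carrier G" using G by (simp add: group.is_monoid monoid.one_closed)
  have one: "?e \<in> carrier (prufer_torus p r)" using \<phi> o by (rule hom_in_carrier)
  have e: "?e = ?e \<otimes>\<^bsub>prufer_torus p r\<^esub> ?e"
    using hom_mult[OF \<phi> o o] G by (simp add: group.is_monoid monoid.l_one)
  have "?e i = 0" for i
  proof (cases "i < r")
    case True
    have "(?e \<otimes>\<^bsub>prufer_torus p r\<^esub> ?e) i = frac (?e i + ?e i)" by (simp add: prufer_torus_def)
    with fun_cong[OF e, of i] have "?e i = frac (?e i + ?e i)" by (rule trans)
    moreover have "0 \<le> ?e i" "?e i < 1" using one True by (simp_all add: prufer_torus_def)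
    ultimately show ?thesis by (intro rat_frac_double_fixed_zero)
  next
    case False
    then show ?thesis using one by (simp add: prufer_torus_def)
  qed
  then show ?thesis by (simp add: prufer_torus_def fun_eq_iff)
qed

lemma prufer_hom_nat_pow:
  assumes G: "group G" and \<phi>: "\<phi> \<in> hom G (prufer_torus p r)" and x: "x \<in> carrier G"
  shows "\<phi> (x [^]\<^bsub>G\<^esub> (n::nat)) = \<phi> x [^]\<^bsub>prufer_torus p r\<^esub> n"
proof (induction n)
  case 0
  then show ?case using prufer_hom_one[OF G \<phi>] by simp
next
  case (Suc n)
  have "x [^]\<^bsub>G\<^esub> n \<in> carrier G" using G x by (simp add: group.is_monoid monoid.nat_pow_closed)
  then have "\<phi> (x [^]\<^bsub>G\<^esub> Suc n) = \<phi> (x [^]\<^bsub>G\<^esub> n) \<otimes>\<^bsub>prufer_torus p r\<^esub> \<phi> x"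
    by (simp only: nat_pow_Suc hom_mult[OF \<phi> _ x])
  then show ?case by (simp only: Suc nat_pow_Suc)
qed

lemma prufer_iso_torsion:
  assumes G: "group G" and \<phi>: "\<phi> \<in> iso G (prufer_torus p r)" and p: "prime p" and t: "t \<in> carrier G"
  shows "\<exists>N>0. t [^]\<^bsub>G\<^esub> (N::nat) = \<one>\<^bsub>G\<^esub>"
proof -
  have \<phi>_hom: "\<phi> \<in> hom G (prufer_torus p r)" and \<phi>_inj: "inj_on \<phi> (carrier G)"
    using \<phi> by (auto simp: iso_def bij_betw_def)
  obtain N where N: "N > 0" "\<phi> t [^]\<^bsub>prufer_torus p r\<^esub> (N::nat) = \<one>\<^bsub>prufer_torus p r\<^esub>"
    using prufer_torus_torsion[OF hom_in_carrier[OF \<phi>_hom t] p] by auto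
  have "\<phi> (t [^]\<^bsub>G\<^esub> N) = \<phi> \<one>\<^bsub>G\<^esub>"
    using N prufer_hom_nat_pow[OF G \<phi>_hom t, of N] prufer_hom_one[OF G \<phi>_hom] by simp
  moreover have "t [^]\<^bsub>G\<^esub> N \<in> carrier G" "\<one>\<^bsub>G\<^esub> \<in> carrier G"
    using t G by (simp_all add: group.is_monoid monoid.nat_pow_closed monoid.one_closed)
  ultimately have "t [^]\<^bsub>G\<^esub> N = \<one>\<^bsub>G\<^esub>" by (rule inj_onD[OF \<phi>_inj])
  then show ?thesis using N by blast
qed

lemma discrete_p_toral_torsion:
  fixes S :: "'g monoid" (structure)
  assumes S: "discrete_p_toral p S" and g: "g \<in> carrier S"
  shows "\<exists>N>0. g [^] (N::nat) = \<one>"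
proof -
  obtain T r where T: "normal T S" "S\<lparr>carrier := T\<rparr> \<cong> prufer_torus p r" "finite (rcosets T)"
    and p: "prime p" and grp: "group S"
    using S unfolding discrete_p_toral_def by blast
  interpret group S by (rule grp)
  interpret N: normal T S by (rule T(1))
  interpret Q: group "S Mod T" by (rule N.factorgroup_is_group)
  have "T #> g \<in> carrier (S Mod T)" using g by (auto simp: FactGroup_def RCOSETS_def)
  then have "(T #> g) [^]\<^bsub>S Mod T\<^esub> order (S Mod T) = \<one>\<^bsub>S Mod T\<^esub>" by (rule Q.pow_order_eq_1)
  then have "T #> (g [^] order (S Mod T)) = T" using N.FactGroup_pow[OF g] by (simp add: FactGroup_def)
  then have gT: "g [^] order (S Mod T) \<in> T"
    using rcos_self[of "g [^] order (S Mod T)" T] g N.subgroup_axioms by auto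
  obtain \<phi> where "\<phi> \<in> iso (S\<lparr>carrier := T\<rparr>) (prufer_torus p r)" using T(2) unfolding is_iso_def by blast
  then have "\<exists>N>0. (g [^] order (S Mod T)) [^]\<^bsub>S\<lparr>carrier := T\<rparr>\<^esub> (N::nat) = \<one>\<^bsub>S\<lparr>carrier := T\<rparr>\<^esub>"
    by (rule prufer_iso_torsion[OF N.subgroup_is_group[OF grp] _ p]) (simp add: gT)
  then obtain N where N: "N > 0" "(g [^] order (S Mod T)) [^] (N::nat) = \<one>"
    unfolding nat_pow_consistent[symmetric] by auto
  have "finite (carrier (S Mod T))" using T(3) by (simp add: FactGroup_def)
  then have "order (S Mod T) > 0" using Q.one_closed by (auto simp: order_def card_gt_0_iff)
  then show ?thesis using N g by (intro exI[of _ "order (S Mod T) * N"]) (simp add: nat_pow_pow)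
qed

lemma surj_hom_imp_group:
  assumes G': "group G'" and h: "\<Phi> \<in> hom G' G" and s: "\<Phi> ` carrier G' = carrier G"
    and one: "\<Phi> \<one>\<^bsub>G'\<^esub> = \<one>\<^bsub>G\<^esub>"
  shows "group G"
proof -
  interpret g: group G' by (rule G')
  have hm: "\<And>x y. x \<in> carrier G' \<Longrightarrow> y \<in> carrier G' \<Longrightarrow> \<Phi> (x \<otimes>\<^bsub>G'\<^esub> y) = \<Phi> x \<otimes>\<^bsub>G\<^esub> \<Phi> y"
    using h by (simp add: hom_def)
  have ex: "\<And>x. x \<in> carrier G \<Longrightarrow> \<exists>x'\<in>carrier G'. x = \<Phi> x'" using s by blast
  have inC: "\<And>x'. x' \<in> carrier G' \<Longrightarrow> \<Phi> x' \<in> carrier G" using s by blast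
  show ?thesis
  proof (rule groupI)
    fix x y assume x: "x \<in> carrier G" and y: "y \<in> carrier G"
    obtain x' where x': "x' \<in> carrier G'" "x = \<Phi> x'" using ex[OF x] by blast
    obtain y' where y': "y' \<in> carrier G'" "y = \<Phi> y'" using ex[OF y] by blast
    have "x \<otimes>\<^bsub>G\<^esub> y = \<Phi> (x' \<otimes>\<^bsub>G'\<^esub> y')" using hm[OF x'(1) y'(1)] x' y' by simp
    then show "x \<otimes>\<^bsub>G\<^esub> y \<in> carrier G" using inC[OF g.m_closed[OF x'(1) y'(1)]] by simp
  next
    show "\<one>\<^bsub>G\<^esub> \<in> carrier G" using one inC[OF g.one_closed] by simp
  next
    fix x y z assume x: "x \<in> carrier G" and y: "y \<in> carrier G" and z: "z \<in> carrier G"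
    obtain x' where x': "x' \<in> carrier G'" "x = \<Phi> x'" using ex[OF x] by blast
    obtain y' where y': "y' \<in> carrier G'" "y = \<Phi> y'" using ex[OF y] by blast
    obtain z' where z': "z' \<in> carrier G'" "z = \<Phi> z'" using ex[OF z] by blast
    have "x \<otimes>\<^bsub>G\<^esub> y \<otimes>\<^bsub>G\<^esub> z = \<Phi> (x' \<otimes>\<^bsub>G'\<^esub> y' \<otimes>\<^bsub>G'\<^esub> z')"
      using x' y' z' hm[OF x'(1) y'(1)] hm[OF g.m_closed[OF x'(1) y'(1)] z'(1)] by simp
    also have "\<dots> = \<Phi> (x' \<otimes>\<^bsub>G'\<^esub> (y' \<otimes>\<^bsub>G'\<^esub> z'))" using x' y' z' g.m_assoc by simp
    also have "\<dots> = x \<otimes>\<^bsub>G\<^esub> (y \<otimes>\<^bsub>G\<^esub> z)"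
      using x' y' z' hm[OF y'(1) z'(1)] hm[OF x'(1) g.m_closed[OF y'(1) z'(1)]] by simp
    finally show "x \<otimes>\<^bsub>G\<^esub> y \<otimes>\<^bsub>G\<^esub> z = x \<otimes>\<^bsub>G\<^esub> (y \<otimes>\<^bsub>G\<^esub> z)" .
  next
    fix x assume x: "x \<in> carrier G"
    obtain x' where x': "x' \<in> carrier G'" "x = \<Phi> x'" using ex[OF x] by blast
    have "\<one>\<^bsub>G\<^esub> \<otimes>\<^bsub>G\<^esub> x = \<Phi> (\<one>\<^bsub>G'\<^esub> \<otimes>\<^bsub>G'\<^esub> x')" using hm[OF g.one_closed x'(1)] one x' by simp
    then show "\<one>\<^bsub>G\<^esub> \<otimes>\<^bsub>G\<^esub> x = x" using x' by simp
  next
    fix x assume x: "x \<in> carrier G"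
    obtain x' where x': "x' \<in> carrier G'" "x = \<Phi> x'" using ex[OF x] by blast
    have "\<Phi> (inv\<^bsub>G'\<^esub> x') \<otimes>\<^bsub>G\<^esub> x = \<Phi> (inv\<^bsub>G'\<^esub> x' \<otimes>\<^bsub>G'\<^esub> x')"
      using hm[OF g.inv_closed[OF x'(1)] x'(1)] x' by simp
    also have "\<dots> = \<one>\<^bsub>G\<^esub>" using x' one by simp
    finally have "\<Phi> (inv\<^bsub>G'\<^esub> x') \<otimes>\<^bsub>G\<^esub> x = \<one>\<^bsub>G\<^esub>" .
    then show "\<exists>y\<in>carrier G. y \<otimes>\<^bsub>G\<^esub> x = \<one>\<^bsub>G\<^esub>" using inC[OF g.inv_closed[OF x'(1)]] by blast
  qed
qed

lemma iso_reflects_trivial_normal_p_subgroups: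
  assumes \<Phi>: "\<Phi> \<in> iso G G'" and one: "\<Phi> \<one>\<^bsub>G\<^esub> = \<one>\<^bsub>G'\<^esub>"
    and triv: "\<forall>H'. H' \<lhd> G' \<longrightarrow> finite H' \<longrightarrow> (\<exists>n. card H' = p ^ n) \<longrightarrow> H' = {\<one>\<^bsub>G'\<^esub>}"
    and H: "H \<lhd> G" and fin: "finite H" and card: "\<exists>n. card H = p ^ n"
  shows "H = {\<one>\<^bsub>G\<^esub>}"
proof -
  have G: "group G" by (rule normal.axioms(2)[OF H])
  have inj: "inj_on \<Phi> (carrier G)" and onto: "\<Phi> ` carrier G = carrier G'" and hom: "\<Phi> \<in> hom G G'"
    using \<Phi> by (auto simp: iso_def bij_betw_def)
  have G': "group G'" by (rule surj_hom_imp_group[OF G hom onto one])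
  have Hc: "H \<subseteq> carrier G" and H1: "\<one>\<^bsub>G\<^esub> \<in> H"
    using normal_imp_subgroup[OF H] by (auto dest: subgroup.subset subgroup.one_closed)
  have "card (\<Phi> ` H) = card H" using card_image[OF inj_on_subset[OF inj Hc]] .
  then have "\<Phi> ` H = {\<one>\<^bsub>G'\<^esub>}"
    using triv iso_normal_subgroup[OF \<Phi> G G' H] fin card by simp
  then have "\<Phi> x = \<Phi> \<one>\<^bsub>G\<^esub>" if "x \<in> H" for x using imageI[OF that, of \<Phi>] one by simp
  then have "x = \<one>\<^bsub>G\<^esub>" if "x \<in> H" for x using that H1 Hc inj_onD[OF inj] by blast
  then show ?thesis using H1 by blast
qed

lemma r_coset_image: "H #>\<^bsub>G\<^esub> b = (\<lambda>h. h \<otimes>\<^bsub>G\<^esub> b) ` H"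
  by (auto simp: r_coset_def)

lemma set_mult_image: "X <#>\<^bsub>G\<^esub> Y = (\<lambda>(h, k). h \<otimes>\<^bsub>G\<^esub> k) ` (X \<times> Y)"
  by (auto simp: set_mult_def)

context
  fixes G :: "'g monoid" (structure)
  assumes G: "group G"
begin

interpretation group G by (rule G)

lemma conjm_closed: "h \<in> carrier G \<Longrightarrow> x \<in> carrier G \<Longrightarrow> conjm G h x \<in> carrier G"
  by (simp add: conjm_def)

lemma conjm_mult:
  "a \<in> carrier G \<Longrightarrow> b \<in> carrier G \<Longrightarrow> x \<in> carrier G \<Longrightarrow> conjm G (a \<otimes> b) x = conjm G a (conjm G b x)"
  by (simp add: conjm_def inv_mult_group m_assoc)

lemma conjm_one: "x \<in> carrier G \<Longrightarrow> conjm G \<one> x = x"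
  by (simp add: conjm_def)

lemma conjm_image_one: "X \<subseteq> carrier G \<Longrightarrow> conjm G \<one> ` X = X"
  by (force simp: conjm_one subset_iff)

lemma conjm_inj_on: "h \<in> carrier G \<Longrightarrow> inj_on (conjm G h) (carrier G)"
  by (rule inj_onI) (simp add: conjm_def)

lemma conjm_eq_imp_commute:
  assumes a: "a \<in> carrier G" and b: "b \<in> carrier G" and x: "x \<in> carrier G"
    and e: "conjm G a x = conjm G b x"
  shows "(inv b \<otimes> a) \<otimes> x = x \<otimes> (inv b \<otimes> a)"
proof -
  have "inv b \<otimes> (a \<otimes> x \<otimes> inv a) \<otimes> a = inv b \<otimes> (b \<otimes> x \<otimes> inv b) \<otimes> a"
    using e by (simp add: conjm_def)
  moreover have "inv b \<otimes> (a \<otimes> x \<otimes> inv a) \<otimes> a = (inv b \<otimes> a) \<otimes> x" using a b x by (simp add: m_assoc)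
  moreover have "inv b \<otimes> (b \<otimes> x \<otimes> inv b) \<otimes> a = x \<otimes> (inv b \<otimes> a)"
    using a b x by (simp add: m_assoc[symmetric])
  ultimately show ?thesis by simp
qed

lemma conjm_image_pow_psubset:
  assumes g: "g \<in> carrier G" and X: "X \<subseteq> carrier G" and st: "conjm G g ` X \<subset> X"
  shows "conjm G (g [^] Suc j) ` X \<subset> X"
proof (induction j)
  case 0
  then show ?case using st g by simp
next
  case (Suc j)
  have "conjm G (g [^] Suc (Suc j)) ` X = conjm G (g [^] Suc j) ` (conjm G g ` X)"
    using X g by (auto simp: image_image conjm_mult[symmetric] simp del: nat_pow_Suc intro!: image_cong)
  also have "\<dots> \<subset> conjm G (g [^] Suc j) ` X"
    using X st by (intro image_strict_mono[OF inj_on_subset[OF conjm_inj_on]]) (auto simp: g)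
  finally show ?case using Suc by auto
qed

lemma conjm_image_not_psubset:
  assumes g: "g \<in> carrier G" and N: "N > 0" "g [^] (N::nat) = \<one>" and X: "X \<subseteq> carrier G"
  shows "\<not> conjm G g ` X \<subset> X"
proof
  assume "conjm G g ` X \<subset> X"
  then have "conjm G (g [^] Suc (N - 1)) ` X \<subset> X" by (rule conjm_image_pow_psubset[OF g X])
  then show False using N conjm_image_one[OF X] by simp
qed

end

lemma nfs_hom_subgroups: "nfs_hom S F Q R \<phi> \<Longrightarrow> subgroup Q S \<and> subgroup R S"
  by (induction rule: nfs_hom.induct) auto

lemma nfs_hom_image: "nfs_hom S F Q R \<phi> \<Longrightarrow> \<phi> ` Q \<subseteq> R"
  by (induction rule: nfs_hom.induct) auto

lemma fconj_image: "fconj S F P = (\<lambda>\<phi>. \<phi> ` P) ` F P (carrier S)"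
  unfolding fconj_def by blast

text \<open>S being fully normalised makes Out_F(S) finite by saturation, which is what forces the
  elements of Aut_F(S) to be onto. Both assumptions on S hold as soon as S is the first member of
  a fusion controlling family.\<close>

locale plcg =
  fixes p :: nat and S :: "'g monoid" (structure) and F :: "'g set \<Rightarrow> 'g set \<Rightarrow> ('g \<Rightarrow> 'g) set"
    and L :: "('g, 'm) lsys"
  assumes plcg: "p_local_compact_group p S F L"
    and S_fully_normalized: "fully_normalized p S F (carrier S)"
    and S_centric: "F_centric S F (carrier S)"
begin

lemma group_S: "group S"
  using plcg by (simp add: p_local_compact_group_def discrete_p_toral_def)

sublocale group S by (rule group_S)

lemma torsion_S: "g \<in> carrier S \<Longrightarrow> \<exists>N>0. g [^] (N::nat) = \<one>"
  using plcg discrete_p_toral_torsion[of p S g] by (simp add: p_local_compact_group_def)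

lemma fusion_system_F: "fusion_system S F"
  using plcg by (simp add: p_local_compact_group_def saturated_def)

lemma linking_system_L: "linking_system S F L"
  using plcg by (simp add: p_local_compact_group_def)

lemma F_homS: "subgroup P S \<Longrightarrow> subgroup Q S \<Longrightarrow> homS S P Q \<subseteq> F P Q"
  using fusion_system_F unfolding fusion_system_def by blast

lemma F_injhom: "subgroup P S \<Longrightarrow> subgroup Q S \<Longrightarrow> \<phi> \<in> F P Q \<Longrightarrow> \<phi> \<in> injhom S P Q"
  using fusion_system_F unfolding fusion_system_def by blast

lemma F_comp:
  "subgroup P S \<Longrightarrow> subgroup Q S \<Longrightarrow> subgroup R S \<Longrightarrow> \<phi> \<in> F P Q \<Longrightarrow> \<psi> \<in> F Q R \<Longrightarrow>
   restrict (\<psi> \<circ> \<phi>) P \<in> F P R"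
  using fusion_system_F unfolding fusion_system_def by blast

lemma F_onto_image: "subgroup P S \<Longrightarrow> subgroup Q S \<Longrightarrow> \<phi> \<in> F P Q \<Longrightarrow> \<phi> \<in> F P (\<phi> ` P)"
  using fusion_system_F subgroup_self unfolding fusion_system_def by blast

lemma F_inverse:
  "subgroup P S \<Longrightarrow> subgroup Q S \<Longrightarrow> \<phi> \<in> F P Q \<Longrightarrow> restrict (inv_into P \<phi>) (\<phi> ` P) \<in> F (\<phi> ` P) P"
  using fusion_system_F subgroup_self unfolding fusion_system_def by blast

lemma injhomD:
  assumes "\<phi> \<in> injhom S P Q"
  shows "\<phi> \<in> extensional P" "\<And>x. x \<in> P \<Longrightarrow> \<phi> x \<in> Q" "inj_on \<phi> P"
    "\<And>x y. x \<in> P \<Longrightarrow> y \<in> P \<Longrightarrow> \<phi> (x \<otimes> y) = \<phi> x \<otimes> \<phi> y"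
  using assms by (auto simp: injhom_def hom_def)

lemma F_mapsto: "subgroup P S \<Longrightarrow> subgroup Q S \<Longrightarrow> \<phi> \<in> F P Q \<Longrightarrow> x \<in> P \<Longrightarrow> \<phi> x \<in> Q"
  using F_injhom injhomD(2) by blast

lemma injhom_one:
  assumes "\<phi> \<in> injhom S P Q" "subgroup P S" "subgroup Q S"
  shows "\<phi> \<one> = \<one>"
proof -
  have o: "\<one> \<in> P" using assms(2) subgroup.one_closed by blast
  have "\<phi> \<one> \<in> carrier S" using injhomD(2)[OF assms(1) o] subgroup.subset[OF assms(3)] by blast
  moreover have "\<phi> \<one> = \<phi> \<one> \<otimes> \<phi> \<one>" using injhomD(4)[OF assms(1) o o] by simp
  ultimately show ?thesis by (metis l_one one_closed right_cancel)
qed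

lemma transp_one: "subgroup P S \<Longrightarrow> P \<subseteq> Q \<Longrightarrow> \<one> \<in> transp S P Q"
  using conjm_image_one[OF group_S subgroup.subset] by (auto simp: transp_def)

lemma transp_carrier: "P \<subseteq> carrier S \<Longrightarrow> g \<in> carrier S \<Longrightarrow> g \<in> transp S P (carrier S)"
  using conjm_closed[OF group_S] by (auto simp: transp_def)

lemma transp_S_S: "g \<in> carrier S \<Longrightarrow> g \<in> transp S (carrier S) (carrier S)"
  by (rule transp_carrier) auto

lemma transp_self: "subgroup P S \<Longrightarrow> g \<in> P \<Longrightarrow> g \<in> transp S P P"
  by (auto simp: transp_def conjm_def subgroup_def)

lemma restrict_conjm_one: "P \<subseteq> carrier S \<Longrightarrow> restrict (conjm S \<one>) P = restrict (\<lambda>x. x) P"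
  using conjm_one[OF group_S] by (auto simp: fun_eq_iff)

lemma restrict_id_homS:
  assumes "subgroup P S" "P \<subseteq> Q"
  shows "restrict (\<lambda>x. x) P \<in> homS S P Q"
  unfolding homS_def using transp_one[OF assms] restrict_conjm_one[OF subgroup.subset[OF assms(1)]]
  by (intro CollectI exI[of _ \<one>] conjI) simp_all

lemma F_id: "subgroup P S \<Longrightarrow> restrict (\<lambda>x. x) P \<in> F P P"
  using restrict_id_homS F_homS by blast

lemma F_to_carrier:
  assumes P: "subgroup P S" and Q: "subgroup Q S" and \<psi>: "\<psi> \<in> F P Q"
  shows "\<psi> \<in> F P (carrier S)"
proof -
  have "restrict (\<lambda>x. x) Q \<in> F Q (carrier S)"
    using restrict_id_homS[OF Q subgroup.subset[OF Q]] F_homS[OF Q subgroup_self] by blast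
  then have "restrict (restrict (\<lambda>x. x) Q \<circ> \<psi>) P \<in> F P (carrier S)"
    using F_comp[OF P Q subgroup_self \<psi>] by blast
  moreover have "restrict (restrict (\<lambda>x. x) Q \<circ> \<psi>) P = \<psi>"
    using injhomD(1,2)[OF F_injhom[OF P Q \<psi>]] by (auto simp: fun_eq_iff extensional_def)
  ultimately show ?thesis by simp
qed

lemma self_fconj: assumes P: "subgroup P S" shows "P \<in> fconj S F P"
proof -
  have "restrict (\<lambda>x. x) P \<in> F P (carrier S)" by (rule F_to_carrier[OF P P F_id[OF P]])
  moreover have "restrict (\<lambda>x. x) P ` P = P" by auto
  ultimately show ?thesis unfolding fconj_def by (metis (mono_tags, lifting) mem_Collect_eq)
qed

lemma inn_subset_F: "subgroup P S \<Longrightarrow> inn S P \<subseteq> F P P"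
  using F_homS transp_self unfolding inn_def homS_def by blast

lemma Inn_coset_subset_F:
  assumes P: "subgroup P S" and a: "a \<in> F P P"
  shows "inn S P #>\<^bsub>autF_grp S F P\<^esub> a \<subseteq> F P P"
  using inn_subset_F[OF P] F_comp[OF P P P a] unfolding r_coset_def autF_grp_def by auto

lemma carrier_outF: "carrier (outF S F P) = (\<lambda>a. inn S P #>\<^bsub>autF_grp S F P\<^esub> a) ` F P P"
  by (auto simp: outF_def FactGroup_def RCOSETS_def autF_grp_def)

subsection \<open>Elements of Aut_F(S) are automorphisms\<close>

lemma F_S_same_Inn_coset_not_image_psubset:
  defines "A \<equiv> autF_grp S F (carrier S)"
  assumes \<alpha>: "\<alpha> \<in> F (carrier S) (carrier S)" and \<beta>: "\<beta> \<in> F (carrier S) (carrier S)"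
    and coset: "inn S (carrier S) #>\<^bsub>A\<^esub> \<alpha> = inn S (carrier S) #>\<^bsub>A\<^esub> \<beta>"
  shows "\<not> \<beta> ` carrier S \<subset> \<alpha> ` carrier S"
proof -
  let ?S = "carrier S"
  have \<beta>_ext: "\<beta> \<in> extensional ?S" and \<beta>_into: "\<beta> ` ?S \<subseteq> ?S"
    using injhomD(1,2)[OF F_injhom[OF subgroup_self subgroup_self \<beta>]] by auto
  have \<alpha>_into: "\<alpha> ` ?S \<subseteq> ?S" using F_mapsto[OF subgroup_self subgroup_self \<alpha>] by blast
  have "restrict (restrict (conjm S \<one>) ?S \<circ> \<beta>) ?S = \<beta>"
    using \<beta>_ext \<beta>_into restrict_conjm_one[of ?S] by (auto simp: fun_eq_iff extensional_def)
  moreover have "restrict (conjm S \<one>) ?S \<in> inn S ?S" unfolding inn_def by blast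
  ultimately have "\<beta> \<in> inn S ?S #>\<^bsub>A\<^esub> \<beta>"
    unfolding r_coset_def A_def autF_grp_def by (intro UN_I[of "restrict (conjm S \<one>) ?S"]) simp_all
  then have "\<beta> \<in> inn S ?S #>\<^bsub>A\<^esub> \<alpha>" using coset by simp
  then obtain g where g: "g \<in> ?S" and \<beta>_eq: "\<beta> = restrict (restrict (conjm S g) ?S \<circ> \<alpha>) ?S"
    unfolding r_coset_def A_def autF_grp_def inn_def by simp blast
  have "\<beta> ` ?S = conjm S g ` (\<alpha> ` ?S)" using \<beta>_eq \<alpha>_into by auto
  moreover obtain N where "N > 0" "g [^] (N::nat) = \<one>" using torsion_S[OF g] by blast
  ultimately show ?thesis using conjm_image_not_psubset[OF group_S g _ _ \<alpha>_into] by simp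
qed

lemma F_S_iterates_psubset:
  assumes \<beta>: "\<beta> \<in> F (carrier S) (carrier S)" and proper: "\<beta> ` carrier S \<subset> carrier S"
  obtains b :: "nat \<Rightarrow> 'g \<Rightarrow> 'g" where "\<And>n. b n \<in> F (carrier S) (carrier S)"
    and "\<And>n m. n < m \<Longrightarrow> b m ` carrier S \<subset> b n ` carrier S"
proof -
  let ?S = "carrier S"
  note SSS = subgroup_self subgroup_self
  define b where "b n = ((\<lambda>f. restrict (\<beta> \<circ> f) ?S) ^^ n) (restrict (\<lambda>x. x) ?S)" for n
  have b_Suc: "b (Suc n) = restrict (\<beta> \<circ> b n) ?S" for n by (simp add: b_def)
  have b_F: "b n \<in> F ?S ?S" for n
  proof (induction n)
    case 0
    show ?case unfolding b_def by (simp only: funpow_0) (rule F_id[OF subgroup_self])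
  next
    case (Suc n)
    then show ?case unfolding b_Suc by (rule F_comp[OF SSS subgroup_self _ \<beta>])
  qed
  have b_step: "b (Suc n) ` ?S \<subset> b n ` ?S" for n
  proof (induction n)
    case 0
    then show ?case using proper by (simp add: b_Suc b_def)
  next
    case (Suc n)
    have "b n ` ?S \<subseteq> ?S" using F_mapsto[OF SSS b_F] by blast
    then have "\<beta> ` (b (Suc n) ` ?S) \<subset> \<beta> ` (b n ` ?S)"
      using image_strict_mono[OF inj_on_subset[OF injhomD(3)[OF F_injhom[OF SSS \<beta>]]] Suc] by blast
    then show ?case by (simp add: b_Suc image_image)
  qed
  have b_psubset: "b m ` ?S \<subset> b n ` ?S" if "n < m" for n m
    using that
  proof (induction m)
    case (Suc m)
    then show ?case using b_step[of m] by (cases "n = m") auto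
  qed simp
  show ?thesis by (rule that[OF b_F b_psubset])
qed

text \<open>Otherwise two iterates with strictly decreasing images lie in the same coset of Inn(S),
  since Out_F(S) is finite.\<close>

lemma F_S_onto:
  assumes \<beta>: "\<beta> \<in> F (carrier S) (carrier S)"
  shows "\<beta> ` carrier S = carrier S"
proof (rule ccontr)
  let ?S = "carrier S" and ?A = "autF_grp S F (carrier S)"
  assume "\<beta> ` ?S \<noteq> ?S"
  then have proper: "\<beta> ` ?S \<subset> ?S" using F_mapsto[OF subgroup_self subgroup_self \<beta>] by auto
  obtain b :: "nat \<Rightarrow> 'g \<Rightarrow> 'g" where b_F: "\<And>n. b n \<in> F ?S ?S"
    and b_psubset: "\<And>n m. n < m \<Longrightarrow> b m ` ?S \<subset> b n ` ?S"
    using F_S_iterates_psubset[OF \<beta> proper] by blast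
  have "range (\<lambda>n. inn S ?S #>\<^bsub>?A\<^esub> b n) \<subseteq> carrier (outF S F ?S)"
    using b_F by (auto simp: outF_def FactGroup_def RCOSETS_def autF_grp_def)
  moreover have "finite (carrier (outF S F ?S))"
    using plcg S_fully_normalized unfolding p_local_compact_group_def saturated_def by blast
  ultimately have "finite (range (\<lambda>n. inn S ?S #>\<^bsub>?A\<^esub> b n))" by (rule finite_subset)
  then have "\<not> inj (\<lambda>n. inn S ?S #>\<^bsub>?A\<^esub> b n)" using finite_imageD infinite_UNIV_nat by blast
  then obtain n m where "n \<noteq> m" and same: "inn S ?S #>\<^bsub>?A\<^esub> b n = inn S ?S #>\<^bsub>?A\<^esub> b m"
    unfolding inj_def by blast
  then consider "n < m" | "m < n" by linarith
  then show False
    using F_S_same_Inn_coset_not_image_psubset[OF b_F b_F same] b_psubset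
      F_S_same_Inn_coset_not_image_psubset[OF b_F b_F same[symmetric]] by cases blast+
qed

abbreviation "Ob \<equiv> L_ob S F"

lemma Ob_subgroup: "P \<in> Ob \<Longrightarrow> subgroup P S"
  by (simp add: L_ob_def F_centric_def)

lemma Ob_subset: "P \<in> Ob \<Longrightarrow> P \<subseteq> carrier S"
  using Ob_subgroup subgroup.subset by blast

lemma Ob_fconj_self_centralizing: "P \<in> Ob \<Longrightarrow> Q \<in> fconj S F P \<Longrightarrow> cent S Q \<subseteq> Q"
  by (simp add: L_ob_def F_centric_def)

lemma Ob_self_centralizing: "P \<in> Ob \<Longrightarrow> cent S P \<subseteq> P"
  using Ob_fconj_self_centralizing self_fconj Ob_subgroup by blast

lemma carrier_Ob: "carrier S \<in> Ob"
  using S_centric by (simp add: L_ob_def)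

lemma category_at:
  assumes Ob: "P \<in> Ob" "Q \<in> Ob" "R \<in> Ob" "T \<in> Ob"
  shows
  "L_id L P \<in> L_mor L P P \<and>
   (\<forall>f\<in>L_mor L P Q. L_cmp L P Q Q (L_id L Q) f = f \<and> L_cmp L P P Q f (L_id L P) = f) \<and>
   (\<forall>f\<in>L_mor L P Q. \<forall>g\<in>L_mor L Q R. L_cmp L P Q R g f \<in> L_mor L P R) \<and>
   (\<forall>f\<in>L_mor L P Q. \<forall>g\<in>L_mor L Q R. \<forall>h\<in>L_mor L R T.
      L_cmp L P R T h (L_cmp L P Q R g f) = L_cmp L P Q T (L_cmp L Q R T h g) f)"
  using linking_system_L Ob unfolding linking_system_def is_cat_def by simp

lemma linking_system_at:
  assumes Ob: "P \<in> Ob" "Q \<in> Ob" "R \<in> Ob"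
  shows
  "(\<forall>g\<in>transp S P Q. L_dlt L P Q g \<in> L_mor L P Q) \<and>
   L_dlt L P P \<one> = L_id L P \<and>
   (\<forall>g\<in>transp S P Q. \<forall>h\<in>transp S Q R.
      L_dlt L P R (h \<otimes> g) = L_cmp L P Q R (L_dlt L Q R h) (L_dlt L P Q g)) \<and>
   (\<forall>f\<in>L_mor L P Q. L_prj L P Q f \<in> F P Q) \<and>
   L_prj L P P (L_id L P) = restrict id P \<and>
   (\<forall>f\<in>L_mor L P Q. \<forall>g\<in>L_mor L Q R.
      L_prj L P R (L_cmp L P Q R g f) = restrict (L_prj L Q R g \<circ> L_prj L P Q f) P) \<and>
   (\<forall>f\<in>L_mor L P Q. \<forall>z\<in>P \<inter> cent S P. L_cmp L P P Q f (L_dlt L P P z) = f \<longrightarrow> z = \<one>) \<and>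
   L_prj L P Q ` L_mor L P Q = F P Q \<and>
   (\<forall>f\<in>L_mor L P Q. \<forall>f'\<in>L_mor L P Q.
      L_prj L P Q f = L_prj L P Q f' \<longleftrightarrow> (\<exists>z\<in>P \<inter> cent S P. f' = L_cmp L P P Q f (L_dlt L P P z))) \<and>
   (\<forall>g\<in>transp S P Q. L_prj L P Q (L_dlt L P Q g) = restrict (conjm S g) P) \<and>
   (\<forall>f\<in>L_mor L P Q. \<forall>g\<in>P.
      L_cmp L P P Q f (L_dlt L P P g) = L_cmp L P Q Q (L_dlt L Q Q (L_prj L P Q f g)) f)"
  using linking_system_L Ob unfolding linking_system_def by simp

lemma L_id_mor: "P \<in> Ob \<Longrightarrow> L_id L P \<in> L_mor L P P"
  using category_at[of P P P P] by simp

lemma L_comp_id_left: "P \<in> Ob \<Longrightarrow> Q \<in> Ob \<Longrightarrow> f \<in> L_mor L P Q \<Longrightarrow> L_cmp L P Q Q (L_id L Q) f = f"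
  using category_at[of P Q Q Q] by simp

lemma L_comp_id_right: "P \<in> Ob \<Longrightarrow> Q \<in> Ob \<Longrightarrow> f \<in> L_mor L P Q \<Longrightarrow> L_cmp L P P Q f (L_id L P) = f"
  using category_at[of P Q Q Q] by simp

lemma L_comp_mor:
  "P \<in> Ob \<Longrightarrow> Q \<in> Ob \<Longrightarrow> R \<in> Ob \<Longrightarrow> f \<in> L_mor L P Q \<Longrightarrow> g \<in> L_mor L Q R \<Longrightarrow>
   L_cmp L P Q R g f \<in> L_mor L P R"
  using category_at[of P Q R R] by simp

lemma L_comp_assoc:
  "P \<in> Ob \<Longrightarrow> Q \<in> Ob \<Longrightarrow> R \<in> Ob \<Longrightarrow> T \<in> Ob \<Longrightarrow>
   f \<in> L_mor L P Q \<Longrightarrow> g \<in> L_mor L Q R \<Longrightarrow> h \<in> L_mor L R T \<Longrightarrow>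
   L_cmp L P R T h (L_cmp L P Q R g f) = L_cmp L P Q T (L_cmp L Q R T h g) f"
  using category_at[of P Q R T] by simp

lemma delta_mor: "P \<in> Ob \<Longrightarrow> Q \<in> Ob \<Longrightarrow> g \<in> transp S P Q \<Longrightarrow> L_dlt L P Q g \<in> L_mor L P Q"
  using linking_system_at[of P Q Q] by simp

lemma delta_one: "P \<in> Ob \<Longrightarrow> L_dlt L P P \<one> = L_id L P"
  using linking_system_at[of P P P] by simp

lemma delta_comp:
  "P \<in> Ob \<Longrightarrow> Q \<in> Ob \<Longrightarrow> R \<in> Ob \<Longrightarrow> g \<in> transp S P Q \<Longrightarrow> h \<in> transp S Q R \<Longrightarrow>
   L_dlt L P R (h \<otimes> g) = L_cmp L P Q R (L_dlt L Q R h) (L_dlt L P Q g)"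
  using linking_system_at[of P Q R] by simp

lemma proj_F: "P \<in> Ob \<Longrightarrow> Q \<in> Ob \<Longrightarrow> f \<in> L_mor L P Q \<Longrightarrow> L_prj L P Q f \<in> F P Q"
  using linking_system_at[of P Q Q] by simp

lemma proj_id: "P \<in> Ob \<Longrightarrow> L_prj L P P (L_id L P) = restrict id P"
  using linking_system_at[of P P P] by simp

lemma proj_comp:
  "P \<in> Ob \<Longrightarrow> Q \<in> Ob \<Longrightarrow> R \<in> Ob \<Longrightarrow> f \<in> L_mor L P Q \<Longrightarrow> g \<in> L_mor L Q R \<Longrightarrow>
   L_prj L P R (L_cmp L P Q R g f) = restrict (L_prj L Q R g \<circ> L_prj L P Q f) P"
  using linking_system_at[of P Q R] by simp

lemma proj_onto: "P \<in> Ob \<Longrightarrow> Q \<in> Ob \<Longrightarrow> L_prj L P Q ` L_mor L P Q = F P Q"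
  using linking_system_at[of P Q Q] by simp

lemma delta_central_fix_imp_one:
  "P \<in> Ob \<Longrightarrow> Q \<in> Ob \<Longrightarrow> f \<in> L_mor L P Q \<Longrightarrow> z \<in> P \<Longrightarrow> z \<in> cent S P \<Longrightarrow>
   L_cmp L P P Q f (L_dlt L P P z) = f \<Longrightarrow> z = \<one>"
  using linking_system_at[of P Q Q] by simp

lemma proj_delta:
  "P \<in> Ob \<Longrightarrow> Q \<in> Ob \<Longrightarrow> g \<in> transp S P Q \<Longrightarrow> L_prj L P Q (L_dlt L P Q g) = restrict (conjm S g) P"
  using linking_system_at[of P Q Q] by simp

lemma comp_delta:
  "P \<in> Ob \<Longrightarrow> Q \<in> Ob \<Longrightarrow> f \<in> L_mor L P Q \<Longrightarrow> g \<in> P \<Longrightarrow>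
   L_cmp L P P Q f (L_dlt L P P g) = L_cmp L P Q Q (L_dlt L Q Q (L_prj L P Q f g)) f"
  using linking_system_at[of P Q Q] by simp

lemma F_image_Ob:
  assumes P: "P \<in> Ob" and \<phi>: "\<phi> \<in> F P (carrier S)"
  shows "\<phi> ` P \<in> Ob"
proof -
  have Ps: "subgroup P S" by (rule Ob_subgroup[OF P])
  have "\<phi> \<in> hom (S\<lparr>carrier := P\<rparr>) S"
    using F_injhom[OF Ps subgroup_self \<phi>] unfolding injhom_def hom_def by simp
  then have "group_hom (S\<lparr>carrier := P\<rparr>) S \<phi>"
    by (intro group_hom.intro group_hom_axioms.intro subgroup.subgroup_is_group[OF Ps group_S] group_S)
  then have sg: "subgroup (\<phi> ` P) S" using group_hom.img_is_subgroup by fastforce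
  have "cent S R \<subseteq> R" if R: "R \<in> fconj S F (\<phi> ` P)" for R
  proof -
    obtain \<chi> where \<chi>: "\<chi> \<in> F (\<phi> ` P) (carrier S)" and Rd: "R = \<chi> ` \<phi> ` P"
      using R unfolding fconj_def by blast
    have "restrict (\<chi> \<circ> \<phi>) P \<in> F P (carrier S)"
      by (rule F_comp[OF Ps sg subgroup_self F_onto_image[OF Ps subgroup_self \<phi>] \<chi>])
    moreover have "restrict (\<chi> \<circ> \<phi>) P ` P = R" using Rd by auto
    ultimately have "R \<in> fconj S F P" unfolding fconj_def by blast
    then show ?thesis by (rule Ob_fconj_self_centralizing[OF P])
  qed
  then show ?thesis using sg by (simp add: L_ob_def F_centric_def)
qed

lemma delta_inj:
  assumes Q: "Q \<in> Ob" and R: "R \<in> Ob" and a: "a \<in> transp S Q R" and b: "b \<in> transp S Q R"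
    and e: "L_dlt L Q R a = L_dlt L Q R b"
  shows "a = b"
proof -
  have aS: "a \<in> carrier S" and bS: "b \<in> carrier S" using a b by (auto simp: transp_def)
  have "restrict (conjm S a) Q = restrict (conjm S b) Q"
    using proj_delta[OF Q R a] proj_delta[OF Q R b] e by simp
  then have "conjm S a x = conjm S b x" if "x \<in> Q" for x using that by (metis restrict_apply')
  then have "(inv b \<otimes> a) \<otimes> x = x \<otimes> (inv b \<otimes> a)" if "x \<in> Q" for x
    using that Ob_subset[OF Q] conjm_eq_imp_commute[OF group_S aS bS] subsetD by blast
  then have z_cent: "inv b \<otimes> a \<in> cent S Q" using aS bS by (auto simp: cent_def)
  then have zQ: "inv b \<otimes> a \<in> Q" using Ob_self_centralizing[OF Q] by blast
  have bz: "b \<otimes> (inv b \<otimes> a) = a" using aS bS by (simp add: m_assoc[symmetric])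
  have "L_cmp L Q Q R (L_dlt L Q R b) (L_dlt L Q Q (inv b \<otimes> a)) = L_dlt L Q R b"
    using delta_comp[OF Q Q R transp_self[OF Ob_subgroup[OF Q] zQ] b] bz e by simp
  then have "inv b \<otimes> a = \<one>"
    by (rule delta_central_fix_imp_one[OF Q R delta_mor[OF Q R b] zQ z_cent])
  then show ?thesis using bz bS by simp
qed

text \<open>Projecting to F, z centralises the F-conjugate \<pi>(f)(X) of X, so z = \<pi>(f)(w) with w
  central in X; axiom (C) then turns the hypothesis into f \<circ> \<delta>(w) = f, and axiom (A) gives w = 1.\<close>

lemma delta_comp_fix_imp_one:
  assumes X: "X \<in> Ob" and Y: "Y \<in> Ob" and f: "f \<in> L_mor L X Y" and z: "z \<in> Y"
    and fixed: "L_cmp L X Y Y (L_dlt L Y Y z) f = f"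
  shows "z = \<one>"
proof -
  have Xs: "subgroup X S" and Ys: "subgroup Y S" using Ob_subgroup X Y by auto
  define \<psi> where "\<psi> = L_prj L X Y f"
  have \<psi>F: "\<psi> \<in> F X Y" using proj_F[OF X Y f] by (simp add: \<psi>_def)
  note \<psi> = injhomD[OF F_injhom[OF Xs Ys \<psi>F]]
  have zS: "z \<in> carrier S" using z Ob_subset[OF Y] by auto
  have "restrict (restrict (conjm S z) Y \<circ> \<psi>) X = \<psi>"
    using proj_comp[OF X Y Y f delta_mor[OF Y Y transp_self[OF Ys z]]]
      proj_delta[OF Y Y transp_self[OF Ys z]] fixed by (simp add: \<psi>_def)
  then have z_fix: "conjm S z (\<psi> x) = conjm S \<one> (\<psi> x)" if "x \<in> X" for x
    using that \<psi>(2) Ob_subset[OF Y] conjm_one[OF group_S] by (metis comp_apply restrict_apply' subsetD)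
  have z_comm: "z \<otimes> y = y \<otimes> z" if y: "y \<in> \<psi> ` X" for y
  proof -
    obtain x where x: "x \<in> X" and yx: "y = \<psi> x" using y by blast
    have "y \<in> carrier S" using \<psi>(2)[OF x] Ob_subset[OF Y] yx by blast
    then show ?thesis
      using conjm_eq_imp_commute[OF group_S zS one_closed] z_fix[OF x] yx zS by simp
  qed
  then have "z \<in> cent S (\<psi> ` X)" using zS by (auto simp: cent_def)
  moreover have "\<psi> ` X \<in> fconj S F X" using F_to_carrier[OF Xs Ys \<psi>F] unfolding fconj_def by blast
  ultimately obtain w where w: "w \<in> X" and zw: "z = \<psi> w"
    using Ob_fconj_self_centralizing[OF X] by blast
  have "w \<otimes> x = x \<otimes> w" if x: "x \<in> X" for x
  proof (rule inj_onD[OF \<psi>(3)])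
    have "z \<otimes> \<psi> x = \<psi> x \<otimes> z" using z_comm x by blast
    then show "\<psi> (w \<otimes> x) = \<psi> (x \<otimes> w)" using \<psi>(4)[OF w x] \<psi>(4)[OF x w] zw by simp
    show "w \<otimes> x \<in> X" "x \<otimes> w \<in> X" using w x Xs by (simp_all add: subgroup.m_closed)
  qed
  then have w_cent: "w \<in> cent S X" using w Ob_subset[OF X] by (auto simp: cent_def)
  have "L_cmp L X X Y f (L_dlt L X X w) = f"
    using comp_delta[OF X Y f w] fixed zw by (simp add: \<psi>_def)
  then have "w = \<one>" by (rule delta_central_fix_imp_one[OF X Y f w w_cent])
  then show ?thesis using zw injhom_one[OF F_injhom[OF Xs Ys \<psi>F] Xs Ys] by simp
qed

lemma delta_after_incl:
  assumes P: "P \<in> Ob" and Q: "Q \<in> Ob" and PQ: "P \<subseteq> Q" and g: "g \<in> Q"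
  shows "L_cmp L P Q Q (L_dlt L Q Q g) (L_dlt L P Q \<one>) = L_dlt L P Q g"
  using delta_comp[OF P Q Q transp_one[OF Ob_subgroup[OF P] PQ] transp_self[OF Ob_subgroup[OF Q] g]]
    g Ob_subset[OF Q] by auto

lemma delta_before_incl:
  assumes P: "P \<in> Ob" and Q: "Q \<in> Ob" and PQ: "P \<subseteq> Q" and g: "g \<in> P"
  shows "L_cmp L P P Q (L_dlt L P Q \<one>) (L_dlt L P P g) = L_dlt L P Q g"
  using delta_comp[OF P P Q transp_self[OF Ob_subgroup[OF P] g] transp_one[OF Ob_subgroup[OF P] PQ]]
    g Ob_subset[OF P] by auto

lemma proj_after_incl:
  assumes X: "X \<in> Ob" and g: "g \<in> L_mor L (carrier S) (carrier S)"
  shows "L_prj L X (carrier S) (L_cmp L X (carrier S) (carrier S) g (L_dlt L X (carrier S) \<one>)) =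
    restrict (L_prj L (carrier S) (carrier S) g) X"
proof -
  have t: "\<one> \<in> transp S X (carrier S)" by (rule transp_one[OF Ob_subgroup[OF X] Ob_subset[OF X]])
  show ?thesis
    using proj_comp[OF X carrier_Ob carrier_Ob delta_mor[OF X carrier_Ob t] g]
      proj_delta[OF X carrier_Ob t] restrict_conjm_one[OF Ob_subset[OF X]]
    by (simp add: fun_eq_iff)
qed

lemma proj_before_incl:
  assumes X: "X \<in> Ob" and Y: "Y \<in> Ob" and h: "h \<in> L_mor L X Y"
  shows "L_prj L X (carrier S) (L_cmp L X Y (carrier S) (L_dlt L Y (carrier S) \<one>) h) = L_prj L X Y h"
proof -
  have t: "\<one> \<in> transp S Y (carrier S)" by (rule transp_one[OF Ob_subgroup[OF Y] Ob_subset[OF Y]])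
  note \<psi> = injhomD(1,2)[OF F_injhom[OF Ob_subgroup[OF X] Ob_subgroup[OF Y] proj_F[OF X Y h]]]
  show ?thesis
    using proj_comp[OF X Y carrier_Ob h delta_mor[OF Y carrier_Ob t]]
      proj_delta[OF Y carrier_Ob t] restrict_conjm_one[OF Ob_subset[OF Y]] \<psi>
    by (auto simp: fun_eq_iff extensional_def)
qed

lemma delta_inv_comp:
  assumes X: "X \<in> Ob" and Y: "Y \<in> Ob" and v: "v \<in> Y" and h: "h \<in> L_mor L X Y"
  shows "L_cmp L X Y Y (L_dlt L Y Y (inv v)) (L_cmp L X Y Y (L_dlt L Y Y v) h) = h"
proof -
  have Ys: "subgroup Y S" by (rule Ob_subgroup[OF Y])
  have tv: "v \<in> transp S Y Y" and tiv: "inv v \<in> transp S Y Y"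
    using transp_self[OF Ys] v subgroup.m_inv_closed[OF Ys v] by auto
  have "L_cmp L X Y Y (L_dlt L Y Y (inv v)) (L_cmp L X Y Y (L_dlt L Y Y v) h)
     = L_cmp L X Y Y (L_cmp L Y Y Y (L_dlt L Y Y (inv v)) (L_dlt L Y Y v)) h"
    using L_comp_assoc[OF X Y Y Y h delta_mor[OF Y Y tv] delta_mor[OF Y Y tiv]] by simp
  also have "L_cmp L Y Y Y (L_dlt L Y Y (inv v)) (L_dlt L Y Y v) = L_dlt L Y Y (inv v \<otimes> v)"
    using delta_comp[OF Y Y Y tv tiv] by simp
  also have "\<dots> = L_id L Y" using v Ob_subset[OF Y] delta_one[OF Y] by auto
  finally show ?thesis using L_comp_id_left[OF X Y h] by simp
qed

lemma delta_comp_cancel: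
  assumes X: "X \<in> Ob" and Y: "Y \<in> Ob" and f: "f \<in> L_mor L X Y" and u: "u \<in> Y" and v: "v \<in> Y"
    and e: "L_cmp L X Y Y (L_dlt L Y Y u) f = L_cmp L X Y Y (L_dlt L Y Y v) f"
  shows "u = v"
proof -
  have Ys: "subgroup Y S" by (rule Ob_subgroup[OF Y])
  define z where "z = inv v \<otimes> u"
  have zY: "z \<in> Y" using u v Ys by (simp add: z_def subgroup.m_closed subgroup.m_inv_closed)
  have uS: "u \<in> carrier S" and vS: "v \<in> carrier S" using u v Ob_subset[OF Y] by auto
  then have vz: "v \<otimes> z = u" by (simp add: z_def m_assoc[symmetric])
  have tz: "z \<in> transp S Y Y" and tv: "v \<in> transp S Y Y" using transp_self[OF Ys] zY v by auto
  have mz: "L_dlt L Y Y z \<in> L_mor L Y Y" and mv: "L_dlt L Y Y v \<in> L_mor L Y Y"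
    using delta_mor[OF Y Y] tz tv by auto
  have "L_cmp L X Y Y (L_dlt L Y Y v) (L_cmp L X Y Y (L_dlt L Y Y z) f) = L_cmp L X Y Y (L_dlt L Y Y v) f"
    using e delta_comp[OF Y Y Y tz tv] vz L_comp_assoc[OF X Y Y Y f mz mv] by simp
  then have "L_cmp L X Y Y (L_dlt L Y Y z) f = f"
    using delta_inv_comp[OF X Y v] L_comp_mor[OF X Y Y f mz] f by metis
  then have "z = \<one>" by (rule delta_comp_fix_imp_one[OF X Y f zY])
  then show ?thesis using vz v Ob_subset[OF Y] by auto
qed

lemma L_iso_proj_image:
  assumes X: "X \<in> Ob" and Y: "Y \<in> Ob" and f: "L_iso L X Y f"
  shows "L_prj L X Y f ` X = Y"
proof -
  obtain g where fm: "f \<in> L_mor L X Y" and gm: "g \<in> L_mor L Y X"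
    and fg: "L_cmp L Y X Y f g = L_id L Y" using f unfolding L_iso_def by blast
  have e: "restrict (L_prj L X Y f \<circ> L_prj L Y X g) Y = restrict id Y"
    using proj_comp[OF Y X Y gm fm] fg proj_id[OF Y] by simp
  show ?thesis
  proof
    show "L_prj L X Y f ` X \<subseteq> Y"
      using F_mapsto[OF Ob_subgroup[OF X] Ob_subgroup[OF Y] proj_F[OF X Y fm]] by blast
    show "Y \<subseteq> L_prj L X Y f ` X"
    proof
      fix y assume y: "y \<in> Y"
      have "y = L_prj L X Y f (L_prj L Y X g y)" using fun_cong[OF e, of y] y by simp
      then show "y \<in> L_prj L X Y f ` X"
        using F_mapsto[OF Ob_subgroup[OF Y] Ob_subgroup[OF X] proj_F[OF Y X gm] y] by blast
    qed
  qed
qed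

lemma L_iso_comp:
  assumes X: "X \<in> Ob" and Y: "Y \<in> Ob" and Z: "Z \<in> Ob" and f: "L_iso L X Y f" and g: "L_iso L Y Z g"
  shows "L_iso L X Z (L_cmp L X Y Z g f)"
proof -
  obtain f' where fm: "f \<in> L_mor L X Y" and f'm: "f' \<in> L_mor L Y X"
    and ff1: "L_cmp L X Y X f' f = L_id L X" and ff2: "L_cmp L Y X Y f f' = L_id L Y"
    using f unfolding L_iso_def by blast
  obtain g' where gm: "g \<in> L_mor L Y Z" and g'm: "g' \<in> L_mor L Z Y"
    and gg1: "L_cmp L Y Z Y g' g = L_id L Y" and gg2: "L_cmp L Z Y Z g g' = L_id L Z"
    using g unfolding L_iso_def by blast
  have h: "L_cmp L X Y Z g f \<in> L_mor L X Z" by (rule L_comp_mor[OF X Y Z fm gm])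
  have h': "L_cmp L Z Y X f' g' \<in> L_mor L Z X" by (rule L_comp_mor[OF Z Y X g'm f'm])
  have "L_cmp L Y Z X (L_cmp L Z Y X f' g') g = L_cmp L Y Y X f' (L_cmp L Y Z Y g' g)"
    using L_comp_assoc[OF Y Z Y X gm g'm f'm] by simp
  also have "\<dots> = f'" using gg1 L_comp_id_right[OF Y X f'm] by simp
  finally have e1: "L_cmp L Y Z X (L_cmp L Z Y X f' g') g = f'" .
  have "L_cmp L X Z X (L_cmp L Z Y X f' g') (L_cmp L X Y Z g f)
      = L_cmp L X Y X (L_cmp L Y Z X (L_cmp L Z Y X f' g') g) f"
    using L_comp_assoc[OF X Y Z X fm gm h'] by simp
  also have "\<dots> = L_id L X" using e1 ff1 by simp
  finally have i1: "L_cmp L X Z X (L_cmp L Z Y X f' g') (L_cmp L X Y Z g f) = L_id L X" .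
  have "L_cmp L Y X Z (L_cmp L X Y Z g f) f' = L_cmp L Y Y Z g (L_cmp L Y X Y f f')"
    using L_comp_assoc[OF Y X Y Z f'm fm gm] by simp
  also have "\<dots> = g" using ff2 L_comp_id_right[OF Y Z gm] by simp
  finally have e2: "L_cmp L Y X Z (L_cmp L X Y Z g f) f' = g" .
  have "L_cmp L Z X Z (L_cmp L X Y Z g f) (L_cmp L Z Y X f' g')
      = L_cmp L Z Y Z (L_cmp L Y X Z (L_cmp L X Y Z g f) f') g'"
    using L_comp_assoc[OF Z Y X Z g'm f'm h] by simp
  also have "\<dots> = L_id L Z" using e2 gg2 by simp
  finally have i2: "L_cmp L Z X Z (L_cmp L X Y Z g f) (L_cmp L Z Y X f' g') = L_id L Z" .
  show ?thesis unfolding L_iso_def using h h' i1 i2 by blast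
qed

end

section \<open>Transport along automorphisms of S\<close>

definition transport :: "('g \<Rightarrow> 'g) \<Rightarrow> ('g \<Rightarrow> 'g) \<Rightarrow> 'g set \<Rightarrow> ('g \<Rightarrow> 'g) \<Rightarrow> ('g \<Rightarrow> 'g)" where
  "transport \<gamma> \<gamma>' X \<phi> = restrict (\<lambda>x. \<gamma> (\<phi> (\<gamma>' x))) (\<gamma> ` X)"

locale aut_pair = group S for S :: "'g monoid" (structure) +
  fixes \<gamma> \<gamma>' :: "'g \<Rightarrow> 'g"
  assumes \<gamma>_closed: "x \<in> carrier S \<Longrightarrow> \<gamma> x \<in> carrier S"
    and \<gamma>'_closed: "x \<in> carrier S \<Longrightarrow> \<gamma>' x \<in> carrier S"
    and \<gamma>'_\<gamma>: "x \<in> carrier S \<Longrightarrow> \<gamma>' (\<gamma> x) = x"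
    and \<gamma>_\<gamma>': "x \<in> carrier S \<Longrightarrow> \<gamma> (\<gamma>' x) = x"
    and \<gamma>_mult: "x \<in> carrier S \<Longrightarrow> y \<in> carrier S \<Longrightarrow> \<gamma> (x \<otimes> y) = \<gamma> x \<otimes> \<gamma> y"
begin

lemma aut_pair_swap: "aut_pair S \<gamma>' \<gamma>"
proof
  fix x y assume x: "x \<in> carrier S" and y: "y \<in> carrier S"
  have "\<gamma> (\<gamma>' x \<otimes> \<gamma>' y) = x \<otimes> y" using x y by (simp add: \<gamma>_mult \<gamma>'_closed \<gamma>_\<gamma>')
  then show "\<gamma>' (x \<otimes> y) = \<gamma>' x \<otimes> \<gamma>' y" using x y by (metis \<gamma>'_\<gamma> \<gamma>'_closed m_closed)
qed (auto simp: \<gamma>_closed \<gamma>'_closed \<gamma>'_\<gamma> \<gamma>_\<gamma>')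

lemma \<gamma>_image_carrier: "\<gamma> ` carrier S = carrier S"
  using \<gamma>_closed \<gamma>'_closed \<gamma>_\<gamma>' by (metis image_subset_iff subsetI subset_antisym image_eqI)

lemma \<gamma>_group_hom: "group_hom S S \<gamma>"
  using \<gamma>_closed \<gamma>_mult by (auto simp: group_hom_def group_hom_axioms_def hom_def is_group)

lemma \<gamma>_subgroup: "subgroup H S \<Longrightarrow> subgroup (\<gamma> ` H) S"
  using group_hom.subgroup_img_is_subgroup[OF \<gamma>_group_hom] by blast

lemma \<gamma>_inj_on: "inj_on \<gamma> (carrier S)"
  by (metis \<gamma>'_\<gamma> inj_onI)

lemma \<gamma>_image_eq_iff: "A \<subseteq> carrier S \<Longrightarrow> B \<subseteq> carrier S \<Longrightarrow> \<gamma> ` A = \<gamma> ` B \<longleftrightarrow> A = B"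
  using inj_on_image_eq_iff[OF \<gamma>_inj_on] by blast

lemma \<gamma>'_\<gamma>_image: "A \<subseteq> carrier S \<Longrightarrow> \<gamma>' ` \<gamma> ` A = A"
  using \<gamma>'_\<gamma> by (force simp: image_iff subset_iff)

lemma \<gamma>_conjm: "h \<in> carrier S \<Longrightarrow> x \<in> carrier S \<Longrightarrow> \<gamma> (conjm S h x) = conjm S (\<gamma> h) (\<gamma> x)"
  by (simp add: conjm_def \<gamma>_mult \<gamma>_closed group_hom.hom_inv[OF \<gamma>_group_hom])

lemma conjm_\<gamma>_image:
  assumes X: "X \<subseteq> carrier S" and h: "h \<in> carrier S"
  shows "conjm S (\<gamma> h) ` \<gamma> ` X = \<gamma> ` conjm S h ` X"
proof -
  have "conjm S (\<gamma> h) ` \<gamma> ` X = (\<lambda>x. \<gamma> (conjm S h x)) ` X"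
    unfolding image_image by (rule image_cong[OF refl]) (simp add: \<gamma>_conjm h subsetD[OF X])
  then show ?thesis by (simp add: image_image)
qed

lemma nrm_\<gamma>_image:
  assumes X: "X \<subseteq> carrier S"
  shows "nrm S (\<gamma> ` X) = \<gamma> ` nrm S X"
proof
  show "nrm S (\<gamma> ` X) \<subseteq> \<gamma> ` nrm S X"
  proof
    fix g assume g: "g \<in> nrm S (\<gamma> ` X)"
    then have gS: "g \<in> carrier S" and e: "conjm S g ` \<gamma> ` X = \<gamma> ` X" unfolding nrm_def by simp_all
    have hS: "\<gamma>' g \<in> carrier S" and gh: "g = \<gamma> (\<gamma>' g)" using gS by (simp_all add: \<gamma>'_closed \<gamma>_\<gamma>')
    have "\<gamma> ` conjm S (\<gamma>' g) ` X = \<gamma> ` X" using e conjm_\<gamma>_image[OF X hS] gh by simp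
    moreover have "conjm S (\<gamma>' g) ` X \<subseteq> carrier S" using conjm_closed[OF is_group] hS X by blast
    ultimately have "conjm S (\<gamma>' g) ` X = X" using \<gamma>_image_eq_iff[OF _ X] by metis
    then show "g \<in> \<gamma> ` nrm S X" using hS gh unfolding nrm_def by blast
  qed
  show "\<gamma> ` nrm S X \<subseteq> nrm S (\<gamma> ` X)"
  proof
    fix g assume "g \<in> \<gamma> ` nrm S X"
    then obtain h where h: "h \<in> nrm S X" and gh: "g = \<gamma> h" by blast
    have hS: "h \<in> carrier S" and hX: "conjm S h ` X = X" using h unfolding nrm_def by simp_all
    have "conjm S g ` \<gamma> ` X = \<gamma> ` X" using conjm_\<gamma>_image[OF X hS] hX gh by simp
    then show "g \<in> nrm S (\<gamma> ` X)" using \<gamma>_closed[OF hS] gh unfolding nrm_def by simp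
  qed
qed

lemma divisible_\<gamma>_image:
  assumes H: "H \<subseteq> carrier S" and d: "divisible_sub S H"
  shows "divisible_sub S (\<gamma> ` H)"
  unfolding divisible_sub_def
proof (intro ballI allI impI)
  fix x and n :: nat assume x: "x \<in> \<gamma> ` H" and n: "n > 0"
  then obtain x0 where x0: "x0 \<in> H" "x = \<gamma> x0" by blast
  obtain y where y: "y \<in> H" "y [^] n = x0" using d x0 n unfolding divisible_sub_def by blast
  have "\<gamma> y [^] n = x" using group_hom.hom_nat_pow[OF \<gamma>_group_hom] y x0 H by auto
  then show "\<exists>y\<in>\<gamma> ` H. y [^] n = x" using y by blast
qed

lemma ident_comp_\<gamma>_image_subset:
  assumes Y: "Y \<subseteq> carrier S"
  shows "\<gamma> ` ident_comp S Y \<subseteq> ident_comp S (\<gamma> ` Y)"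
proof
  fix z assume "z \<in> \<gamma> ` ident_comp S Y"
  then obtain x H where x: "x \<in> H" "z = \<gamma> x" and H: "subgroup H S" "H \<subseteq> Y" "divisible_sub S H"
    by (auto simp: ident_comp_def)
  have "subgroup (\<gamma> ` H) S" "\<gamma> ` H \<subseteq> \<gamma> ` Y" "divisible_sub S (\<gamma> ` H)"
    using \<gamma>_subgroup[OF H(1)] H divisible_\<gamma>_image[OF subgroup.subset[OF H(1)]] by auto
  then show "z \<in> ident_comp S (\<gamma> ` Y)" using x unfolding ident_comp_def by blast
qed

lemma ident_comp_\<gamma>_image:
  assumes Y: "Y \<subseteq> carrier S"
  shows "ident_comp S (\<gamma> ` Y) = \<gamma> ` ident_comp S Y"
proof
  show "\<gamma> ` ident_comp S Y \<subseteq> ident_comp S (\<gamma> ` Y)" by (rule ident_comp_\<gamma>_image_subset[OF Y])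
  interpret inv: aut_pair S \<gamma>' \<gamma> by (rule aut_pair_swap)
  have "\<gamma>' ` ident_comp S (\<gamma> ` Y) \<subseteq> ident_comp S Y"
    using inv.ident_comp_\<gamma>_image_subset[of "\<gamma> ` Y"] \<gamma>'_\<gamma>_image[OF Y] Y \<gamma>_closed by auto
  then have "\<gamma> ` \<gamma>' ` ident_comp S (\<gamma> ` Y) \<subseteq> \<gamma> ` ident_comp S Y" by blast
  moreover have "ident_comp S (\<gamma> ` Y) \<subseteq> carrier S"
    by (auto simp: ident_comp_def dest: subgroup.subset)
  ultimately show "ident_comp S (\<gamma> ` Y) \<subseteq> \<gamma> ` ident_comp S Y" using inv.\<gamma>'_\<gamma>_image by simp
qed

lemma \<gamma>_iso_image: "I \<subseteq> carrier S \<Longrightarrow> \<gamma> \<in> iso (S\<lparr>carrier := I\<rparr>) (S\<lparr>carrier := \<gamma> ` I\<rparr>)"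
  unfolding iso_def hom_def using \<gamma>_mult inj_on_subset[OF \<gamma>_inj_on]
  by (auto simp: bij_betw_def subset_iff)

lemma card_rcosets_\<gamma>_image:
  assumes Y: "Y \<subseteq> carrier S" and I: "I \<subseteq> carrier S"
  shows "card (rcosets\<^bsub>S\<lparr>carrier := \<gamma> ` Y\<rparr>\<^esub> (\<gamma> ` I)) = card (rcosets\<^bsub>S\<lparr>carrier := Y\<rparr>\<^esub> I)"
proof -
  have rc: "H #>\<^bsub>S\<lparr>carrier := Z\<rparr>\<^esub> b = (\<lambda>h. h \<otimes> b) ` H" for H Z b by (auto simp: r_coset_def)
  have "\<gamma> ` I #>\<^bsub>S\<lparr>carrier := \<gamma> ` Y\<rparr>\<^esub> \<gamma> a = \<gamma> ` (I #>\<^bsub>S\<lparr>carrier := Y\<rparr>\<^esub> a)" if a: "a \<in> Y" for a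
  proof -
    have "(\<lambda>h. h \<otimes> \<gamma> a) ` \<gamma> ` I = \<gamma> ` (\<lambda>h. h \<otimes> a) ` I"
      unfolding image_image by (rule image_cong[OF refl]) (use a Y I in \<open>simp add: \<gamma>_mult subset_iff\<close>)
    then show ?thesis unfolding rc .
  qed
  then have e: "rcosets\<^bsub>S\<lparr>carrier := \<gamma> ` Y\<rparr>\<^esub> (\<gamma> ` I) = (\<lambda>C. \<gamma> ` C) ` (rcosets\<^bsub>S\<lparr>carrier := Y\<rparr>\<^esub> I)"
    unfolding RCOSETS_def by auto
  have "rcosets\<^bsub>S\<lparr>carrier := Y\<rparr>\<^esub> I \<subseteq> Pow (carrier S)"
    using I Y by (auto simp: RCOSETS_def r_coset_def subset_iff)
  then have "inj_on (\<lambda>C. \<gamma> ` C) (rcosets\<^bsub>S\<lparr>carrier := Y\<rparr>\<^esub> I)"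
    by (rule inj_on_subset[OF inj_on_image_Pow[OF \<gamma>_inj_on]])
  then show ?thesis unfolding e by (rule card_image)
qed

lemma ptord_\<gamma>_image:
  assumes Y: "Y \<subseteq> carrier S"
  shows "ptord p S (\<gamma> ` Y) = ptord p S Y"
proof -
  interpret inv: aut_pair S \<gamma>' \<gamma> by (rule aut_pair_swap)
  let ?I = "ident_comp S Y"
  have IS: "?I \<subseteq> carrier S" using Y by (auto simp: ident_comp_def)
  have "S\<lparr>carrier := ?I\<rparr> \<cong> S\<lparr>carrier := \<gamma> ` ?I\<rparr>" using \<gamma>_iso_image[OF IS] unfolding is_iso_def by blast
  moreover have "\<gamma> ` ?I \<subseteq> carrier S" using IS \<gamma>_closed by blast
  then have "\<gamma>' \<in> iso (S\<lparr>carrier := \<gamma> ` ?I\<rparr>) (S\<lparr>carrier := \<gamma>' ` \<gamma> ` ?I\<rparr>)"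
    by (rule inv.\<gamma>_iso_image)
  then have "\<gamma>' \<in> iso (S\<lparr>carrier := \<gamma> ` ?I\<rparr>) (S\<lparr>carrier := ?I\<rparr>)"
    unfolding \<gamma>'_\<gamma>_image[OF IS] .
  then have "S\<lparr>carrier := \<gamma> ` ?I\<rparr> \<cong> S\<lparr>carrier := ?I\<rparr>" unfolding is_iso_def by blast
  ultimately have "(S\<lparr>carrier := \<gamma> ` ?I\<rparr> \<cong> prufer_torus p r) = (S\<lparr>carrier := ?I\<rparr> \<cong> prufer_torus p r)" for r
    using iso_trans by blast
  then have "ptrank p S (\<gamma> ` Y) = ptrank p S Y" unfolding ptrank_def ident_comp_\<gamma>_image[OF Y] by simp
  moreover have "card (rcosets\<^bsub>S\<lparr>carrier := \<gamma> ` Y\<rparr>\<^esub> (ident_comp S (\<gamma> ` Y))) =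
      card (rcosets\<^bsub>S\<lparr>carrier := Y\<rparr>\<^esub> ?I)"
    unfolding ident_comp_\<gamma>_image[OF Y] by (rule card_rcosets_\<gamma>_image[OF Y IS])
  ultimately show ?thesis unfolding ptord_def by simp
qed

lemma transport_image:
  assumes P: "P \<subseteq> carrier S" and \<phi>: "\<And>x. x \<in> P \<Longrightarrow> \<phi> x \<in> carrier S"
  shows "transport \<gamma> \<gamma>' P \<phi> ` \<gamma> ` P = \<gamma> ` \<phi> ` P"
proof -
  have "transport \<gamma> \<gamma>' P \<phi> ` \<gamma> ` P = (\<lambda>x. \<gamma> (\<phi> x)) ` P"
    unfolding image_image by (rule image_cong[OF refl]) (use P in \<open>simp add: transport_def \<gamma>'_\<gamma> subset_iff\<close>)
  then show ?thesis by (simp add: image_image)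
qed

lemma transport_transport:
  assumes P: "P \<subseteq> carrier S" and a: "a \<in> extensional P" and a_into: "\<And>x. x \<in> P \<Longrightarrow> a x \<in> carrier S"
  shows "transport \<gamma>' \<gamma> (\<gamma> ` P) (transport \<gamma> \<gamma>' P a) = a"
proof (rule extensionalityI[OF _ a])
  show "transport \<gamma>' \<gamma> (\<gamma> ` P) (transport \<gamma> \<gamma>' P a) \<in> extensional P"
    unfolding transport_def \<gamma>'_\<gamma>_image[OF P] by (rule restrict_extensional)
  fix x assume x: "x \<in> P"
  then have "x \<in> carrier S" using P by blast
  then show "transport \<gamma>' \<gamma> (\<gamma> ` P) (transport \<gamma> \<gamma>' P a) x = a x"
    using x \<gamma>'_\<gamma>[OF a_into[OF x]] unfolding transport_def \<gamma>'_\<gamma>_image[OF P] by (simp add: \<gamma>'_\<gamma>)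
qed

lemma transport_comp:
  assumes P: "P \<subseteq> carrier S" and b: "\<And>x. x \<in> P \<Longrightarrow> b x \<in> Q" and Q: "Q \<subseteq> carrier S"
  shows "transport \<gamma> \<gamma>' P (restrict (a \<circ> b) P) = restrict (transport \<gamma> \<gamma>' Q a \<circ> transport \<gamma> \<gamma>' P b) (\<gamma> ` P)"
proof
  fix y
  show "transport \<gamma> \<gamma>' P (restrict (a \<circ> b) P) y =
      restrict (transport \<gamma> \<gamma>' Q a \<circ> transport \<gamma> \<gamma>' P b) (\<gamma> ` P) y"
  proof (cases "y \<in> \<gamma> ` P")
    case True
    then obtain x where x: "x \<in> P" "y = \<gamma> x" by blast
    have "x \<in> carrier S" "b x \<in> carrier S" using x(1) b[OF x(1)] P Q by auto
    then show ?thesis using x b[OF x(1)] by (simp add: transport_def \<gamma>'_\<gamma>)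
  qed (simp add: transport_def)
qed

lemma transport_restrict:
  assumes "Q \<subseteq> carrier S"
  shows "transport \<gamma> \<gamma>' Q (restrict \<beta> Q) = restrict (transport \<gamma> \<gamma>' (carrier S) \<beta>) (\<gamma> ` Q)"
proof
  fix x show "transport \<gamma> \<gamma>' Q (restrict \<beta> Q) x = restrict (transport \<gamma> \<gamma>' (carrier S) \<beta>) (\<gamma> ` Q) x"
    using assms \<gamma>'_\<gamma> \<gamma>_image_carrier by (cases "x \<in> \<gamma> ` Q") (auto simp: transport_def subset_iff)
qed

lemma transport_conjm:
  assumes P: "P \<subseteq> carrier S" and g: "g \<in> carrier S"
  shows "transport \<gamma> \<gamma>' P (restrict (conjm S g) P) = restrict (conjm S (\<gamma> g)) (\<gamma> ` P)"
proof
  fix y show "transport \<gamma> \<gamma>' P (restrict (conjm S g) P) y = restrict (conjm S (\<gamma> g)) (\<gamma> ` P) y"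
    using P g by (cases "y \<in> \<gamma> ` P") (auto simp: transport_def \<gamma>'_\<gamma> \<gamma>_conjm)
qed

end

locale plcg_aut = plcg p S F L + aut_pair S \<gamma> \<gamma>'
  for p and S :: "'g monoid" (structure) and F and L :: "('g, 'm) lsys" and \<gamma> \<gamma>'
begin

lemma plcg_aut_swap: "plcg_aut p S F L \<gamma>' \<gamma>"
  using plcg_axioms aut_pair_swap by (simp add: plcg_aut_def)

context
  fixes P assumes P: "subgroup P S"
begin

lemma transport_F_mult:
  "a \<in> F P P \<Longrightarrow> b \<in> F P P \<Longrightarrow> transport \<gamma> \<gamma>' P (a \<otimes>\<^bsub>autF_grp S F P\<^esub> b) =
     transport \<gamma> \<gamma>' P a \<otimes>\<^bsub>autF_grp S F (\<gamma> ` P)\<^esub> transport \<gamma> \<gamma>' P b"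
  using transport_comp[OF subgroup.subset[OF P] F_mapsto[OF P P] subgroup.subset[OF P]]
  by (simp add: autF_grp_def)

lemma transport_inj_on_F: "inj_on (transport \<gamma> \<gamma>' P) (F P P)"
proof (rule inj_on_inverseI)
  fix a assume "a \<in> F P P"
  then show "transport \<gamma>' \<gamma> (\<gamma> ` P) (transport \<gamma> \<gamma>' P a) = a"
    using transport_transport[OF subgroup.subset[OF P]] injhomD(1,2)[OF F_injhom[OF P P]]
      subgroup.subset[OF P] by blast
qed

lemma transport_inn: "transport \<gamma> \<gamma>' P ` inn S P = inn S (\<gamma> ` P)"
proof -
  have inn: "inn S X = (\<lambda>g. restrict (conjm S g) X) ` X" for X unfolding inn_def by blast
  have "transport \<gamma> \<gamma>' P ` inn S P = (\<lambda>g. restrict (conjm S (\<gamma> g)) (\<gamma> ` P)) ` P"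
    unfolding inn image_image using transport_conjm[OF subgroup.subset[OF P]] subgroup.subset[OF P]
    by (intro image_cong) auto
  also have "\<dots> = inn S (\<gamma> ` P)" unfolding inn by (simp add: image_image)
  finally show ?thesis .
qed

lemma transport_Inn_coset:
  assumes a: "a \<in> F P P"
  shows "transport \<gamma> \<gamma>' P ` (inn S P #>\<^bsub>autF_grp S F P\<^esub> a) =
    inn S (\<gamma> ` P) #>\<^bsub>autF_grp S F (\<gamma> ` P)\<^esub> transport \<gamma> \<gamma>' P a"
proof -
  have "transport \<gamma> \<gamma>' P ` (inn S P #>\<^bsub>autF_grp S F P\<^esub> a)
      = (\<lambda>h. transport \<gamma> \<gamma>' P h \<otimes>\<^bsub>autF_grp S F (\<gamma> ` P)\<^esub> transport \<gamma> \<gamma>' P a) ` inn S P"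
    unfolding r_coset_image image_image using transport_F_mult[OF _ a] inn_subset_F[OF P]
    by (intro image_cong) auto
  also have "\<dots> = inn S (\<gamma> ` P) #>\<^bsub>autF_grp S F (\<gamma> ` P)\<^esub> transport \<gamma> \<gamma>' P a"
    unfolding transport_inn[symmetric] r_coset_image image_image ..
  finally show ?thesis .
qed

lemma transport_set_mult:
  assumes X: "X \<subseteq> F P P" and Y: "Y \<subseteq> F P P"
  shows "transport \<gamma> \<gamma>' P ` (X <#>\<^bsub>autF_grp S F P\<^esub> Y) =
    transport \<gamma> \<gamma>' P ` X <#>\<^bsub>autF_grp S F (\<gamma> ` P)\<^esub> transport \<gamma> \<gamma>' P ` Y"
proof -
  let ?c = "transport \<gamma> \<gamma>' P"
  have "?c ` (X <#>\<^bsub>autF_grp S F P\<^esub> Y) = (\<lambda>(h, k). ?c h \<otimes>\<^bsub>autF_grp S F (\<gamma> ` P)\<^esub> ?c k) ` (X \<times> Y)"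
    unfolding set_mult_image image_image using transport_F_mult X Y by (intro image_cong) auto
  also have "\<dots> = (\<lambda>(h, k). h \<otimes>\<^bsub>autF_grp S F (\<gamma> ` P)\<^esub> k) ` (map_prod ?c ?c ` (X \<times> Y))"
    by (simp add: image_image case_prod_beta)
  also have "map_prod ?c ?c ` (X \<times> Y) = ?c ` X \<times> ?c ` Y" by (rule map_prod_surj_on) simp_all
  finally show ?thesis unfolding set_mult_image .
qed

lemma outF_transport_iso:
  assumes FPP: "F (\<gamma> ` P) (\<gamma> ` P) = transport \<gamma> \<gamma>' P ` F P P"
  shows "(\<lambda>X. transport \<gamma> \<gamma>' P ` X) \<in> iso (outF S F P) (outF S F (\<gamma> ` P))"
proof -
  let ?c = "transport \<gamma> \<gamma>' P"
  have onto: "(\<lambda>X. ?c ` X) ` carrier (outF S F P) = carrier (outF S F (\<gamma> ` P))"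
    unfolding carrier_outF FPP image_image using transport_Inn_coset by auto
  have inj: "inj_on (\<lambda>X. ?c ` X) (carrier (outF S F P))"
    by (rule inj_on_subset[OF inj_on_image_Pow[OF transport_inj_on_F]])
      (use Inn_coset_subset_F[OF P] in \<open>auto simp: carrier_outF\<close>)
  have "(\<lambda>X. ?c ` X) \<in> hom (outF S F P) (outF S F (\<gamma> ` P))"
  proof (rule homI)
    show "\<And>X. X \<in> carrier (outF S F P) \<Longrightarrow> ?c ` X \<in> carrier (outF S F (\<gamma> ` P))" using onto by blast
    fix X Y assume "X \<in> carrier (outF S F P)" and "Y \<in> carrier (outF S F P)"
    then have "X \<subseteq> F P P" "Y \<subseteq> F P P" using Inn_coset_subset_F[OF P] unfolding carrier_outF by auto
    then show "?c ` (X \<otimes>\<^bsub>outF S F P\<^esub> Y) = ?c ` X \<otimes>\<^bsub>outF S F (\<gamma> ` P)\<^esub> ?c ` Y"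
      using transport_set_mult by (simp add: outF_def FactGroup_def)
  qed
  then show ?thesis using inj onto unfolding iso_def bij_betw_def by blast
qed

end

end

locale fusion_aut = plcg_aut +
  assumes \<gamma>_Ob: "P \<in> Ob \<Longrightarrow> \<gamma> ` P \<in> Ob"
    and F_\<gamma>_image: "P \<in> Ob \<Longrightarrow> Q \<in> Ob \<Longrightarrow> F (\<gamma> ` P) (\<gamma> ` Q) = transport \<gamma> \<gamma>' P ` F P Q"
begin

lemma F_S_transport:
  "\<beta> \<in> F (carrier S) (carrier S) \<Longrightarrow> transport \<gamma> \<gamma>' (carrier S) \<beta> \<in> F (carrier S) (carrier S)"
  using F_\<gamma>_image[OF carrier_Ob carrier_Ob] \<gamma>_image_carrier by auto

lemma nfs_hom_transport: "nfs_hom S F Q R \<phi> \<Longrightarrow> nfs_hom S F (\<gamma> ` Q) (\<gamma> ` R) (transport \<gamma> \<gamma>' Q \<phi>)"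
proof (induction rule: nfs_hom.induct)
  case (restr \<alpha> Q R)
  have QS: "Q \<subseteq> carrier S" using restr(2) subgroup.subset by blast
  have "transport \<gamma> \<gamma>' Q (restrict \<alpha> Q) ` \<gamma> ` Q = \<gamma> ` restrict \<alpha> Q ` Q"
    by (rule transport_image[OF QS]) (use F_mapsto[OF subgroup_self subgroup_self restr(1)] QS in auto)
  then have "transport \<gamma> \<gamma>' Q (restrict \<alpha> Q) ` \<gamma> ` Q \<subseteq> \<gamma> ` R" using restr(4) by auto
  then have "transport \<gamma> \<gamma>' (carrier S) \<alpha> ` \<gamma> ` Q \<subseteq> \<gamma> ` R" unfolding transport_restrict[OF QS] by simp
  then show ?case unfolding transport_restrict[OF QS]
    by (intro nfs_hom.restr F_S_transport restr \<gamma>_subgroup)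
next
  case (comp Q R \<phi> T \<psi>)
  have QS: "Q \<subseteq> carrier S" and RS: "R \<subseteq> carrier S"
    using nfs_hom_subgroups[OF comp(1)] subgroup.subset by blast+
  have "transport \<gamma> \<gamma>' Q (restrict (\<psi> \<circ> \<phi>) Q) = restrict (transport \<gamma> \<gamma>' R \<psi> \<circ> transport \<gamma> \<gamma>' Q \<phi>) (\<gamma> ` Q)"
    using transport_comp[OF QS _ RS] nfs_hom_image[OF comp(1)] by blast
  then show ?case using nfs_hom.comp[OF comp(3) comp(4)] by (simp only:)
qed

lemma nfs_conj_\<gamma>_image:
  assumes X: "subgroup X S" and Y: "Y \<in> nfs_conj S F X"
  shows "\<gamma> ` Y \<in> nfs_conj S F (\<gamma> ` X)"
proof -
  obtain \<phi> where \<phi>: "nfs_hom S F X (carrier S) \<phi>" and Yd: "Y = \<phi> ` X"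
    using Y unfolding nfs_conj_def by blast
  have "nfs_hom S F (\<gamma> ` X) (carrier S) (transport \<gamma> \<gamma>' X \<phi>)"
    using nfs_hom_transport[OF \<phi>] \<gamma>_image_carrier by simp
  moreover have "transport \<gamma> \<gamma>' X \<phi> ` \<gamma> ` X = \<gamma> ` Y"
    using transport_image[OF subgroup.subset[OF X]] nfs_hom_image[OF \<phi>] Yd by blast
  ultimately show ?thesis unfolding nfs_conj_def by blast
qed

lemma fconj_\<gamma>_image:
  assumes P: "P \<in> Ob"
  shows "fconj S F (\<gamma> ` P) = (\<lambda>Y. \<gamma> ` Y) ` fconj S F P"
proof -
  have "fconj S F (\<gamma> ` P) = (\<lambda>\<phi>. transport \<gamma> \<gamma>' P \<phi> ` \<gamma> ` P) ` F P (carrier S)"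
    unfolding fconj_image using F_\<gamma>_image[OF P carrier_Ob] \<gamma>_image_carrier by (simp add: image_image)
  also have "\<dots> = (\<lambda>\<phi>. \<gamma> ` \<phi> ` P) ` F P (carrier S)"
    using transport_image[OF Ob_subset[OF P]] F_mapsto[OF Ob_subgroup[OF P] subgroup_self] by simp
  finally show ?thesis unfolding fconj_image by (simp add: image_image)
qed

lemma fully_normalized_\<gamma>_image:
  assumes P: "P \<in> Ob" and fn: "fully_normalized p S F P"
  shows "fully_normalized p S F (\<gamma> ` P)"
  unfolding fully_normalized_def
proof (intro conjI ballI)
  show "subgroup (\<gamma> ` P) S" using \<gamma>_subgroup Ob_subgroup[OF P] by blast
  fix Q assume "Q \<in> fconj S F (\<gamma> ` P)"
  then obtain Q0 where Q0: "Q0 \<in> fconj S F P" and QQ: "Q = \<gamma> ` Q0" using fconj_\<gamma>_image[OF P] by blast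
  have Q0S: "Q0 \<subseteq> carrier S"
    using Q0 F_mapsto[OF Ob_subgroup[OF P] subgroup_self] unfolding fconj_def by blast
  have nS: "nrm S X \<subseteq> carrier S" for X by (auto simp: nrm_def)
  have "ptord p S (nrm S Q) = ptord p S (nrm S Q0)"
    unfolding QQ nrm_\<gamma>_image[OF Q0S] by (rule ptord_\<gamma>_image[OF nS])
  moreover have "ptord p S (nrm S (\<gamma> ` P)) = ptord p S (nrm S P)"
    unfolding nrm_\<gamma>_image[OF Ob_subset[OF P]] by (rule ptord_\<gamma>_image[OF nS])
  ultimately show "ptord_le (ptord p S (nrm S Q)) (ptord p S (nrm S (\<gamma> ` P)))"
    using fn Q0 unfolding fully_normalized_def by simp
qed

lemma F_radical_\<gamma>_image:
  assumes P: "P \<in> Ob" and rad: "F_radical p S F P"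
  shows "F_radical p S F (\<gamma> ` P)"
proof -
  interpret inv: plcg_aut p S F L \<gamma>' \<gamma> by (rule plcg_aut_swap)
  have Ps: "subgroup P S" and PS: "P \<subseteq> carrier S" using Ob_subgroup[OF P] Ob_subset[OF P] .
  have P's: "subgroup (\<gamma> ` P) S" by (rule \<gamma>_subgroup[OF Ps])
  have "transport \<gamma>' \<gamma> (\<gamma> ` P) ` F (\<gamma> ` P) (\<gamma> ` P) = (\<lambda>a. a) ` F P P"
    unfolding F_\<gamma>_image[OF P P] image_image using transport_transport[OF PS]
      injhomD(1,2)[OF F_injhom[OF Ps Ps]] PS by (intro image_cong) blast+
  then have "F (\<gamma>' ` \<gamma> ` P) (\<gamma>' ` \<gamma> ` P) = transport \<gamma>' \<gamma> (\<gamma> ` P) ` F (\<gamma> ` P) (\<gamma> ` P)"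
    unfolding \<gamma>'_\<gamma>_image[OF PS] by simp
  then have iso: "(\<lambda>X. transport \<gamma>' \<gamma> (\<gamma> ` P) ` X) \<in> iso (outF S F (\<gamma> ` P)) (outF S F P)"
    using inv.outF_transport_iso[OF P's] unfolding \<gamma>'_\<gamma>_image[OF PS] by blast
  have "transport \<gamma>' \<gamma> (\<gamma> ` P) ` inn S (\<gamma> ` P) = inn S P"
    using inv.transport_inn[OF P's] unfolding \<gamma>'_\<gamma>_image[OF PS] .
  then have one: "transport \<gamma>' \<gamma> (\<gamma> ` P) ` \<one>\<^bsub>outF S F (\<gamma> ` P)\<^esub> = \<one>\<^bsub>outF S F P\<^esub>"
    by (simp add: outF_def FactGroup_def)
  show ?thesis unfolding F_radical_def
    using P's iso_reflects_trivial_normal_p_subgroups[OF iso one] rad unfolding F_radical_def by blast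
qed

end

section \<open>Isotypical self equivalences\<close>

locale isotypical = plcg p S F L
  for p and S :: "'g monoid" (structure) and F and L :: "('g, 'm) lsys" +
  fixes \<Psi> :: "('g, 'm) fnctr"
  assumes Psi_AutI: "\<Psi> \<in> AutI_typ S F L"
begin

abbreviation "obj \<equiv> fst \<Psi>"
abbreviation "mor \<equiv> snd \<Psi>"

lemma self_equivalence_Psi: "self_equivalence Ob L \<Psi>"
  using Psi_AutI by (simp add: AutI_typ_def)

lemma obj_Ob: "P \<in> Ob \<Longrightarrow> obj P \<in> Ob"
  using self_equivalence_Psi by (simp add: self_equivalence_def is_functor_def)

lemma functor_at:
  assumes "P \<in> Ob" "Q \<in> Ob" "R \<in> Ob"
  shows "mor P P (L_id L P) = L_id L (obj P) \<and>
    (\<forall>f\<in>L_mor L P Q. mor P Q f \<in> L_mor L (obj P) (obj Q)) \<and>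
    (\<forall>f\<in>L_mor L P Q. \<forall>g\<in>L_mor L Q R.
       mor P R (L_cmp L P Q R g f) = L_cmp L (obj P) (obj Q) (obj R) (mor Q R g) (mor P Q f))"
  using self_equivalence_Psi assms by (simp add: self_equivalence_def is_functor_def)

lemma mor_id: "P \<in> Ob \<Longrightarrow> mor P P (L_id L P) = L_id L (obj P)"
  using functor_at[of P P P] by simp

lemma mor_mor: "P \<in> Ob \<Longrightarrow> Q \<in> Ob \<Longrightarrow> f \<in> L_mor L P Q \<Longrightarrow> mor P Q f \<in> L_mor L (obj P) (obj Q)"
  using functor_at[of P Q Q] by simp

lemma mor_comp:
  "P \<in> Ob \<Longrightarrow> Q \<in> Ob \<Longrightarrow> R \<in> Ob \<Longrightarrow> f \<in> L_mor L P Q \<Longrightarrow> g \<in> L_mor L Q R \<Longrightarrow>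
   mor P R (L_cmp L P Q R g f) = L_cmp L (obj P) (obj Q) (obj R) (mor Q R g) (mor P Q f)"
  using functor_at[of P Q R] by simp

lemma mor_bij: "P \<in> Ob \<Longrightarrow> Q \<in> Ob \<Longrightarrow> bij_betw (mor P Q) (L_mor L P Q) (L_mor L (obj P) (obj Q))"
  using self_equivalence_Psi unfolding self_equivalence_def by blast

lemma obj_essentially_surj: "Q \<in> Ob \<Longrightarrow> \<exists>P\<in>Ob. \<exists>f. L_iso L (obj P) Q f"
  using self_equivalence_Psi unfolding self_equivalence_def by blast

lemma mor_delta_image: "P \<in> Ob \<Longrightarrow> mor P P ` L_dlt L P P ` P = L_dlt L (obj P) (obj P) ` obj P"
  using Psi_AutI unfolding AutI_typ_def by blast

lemma mor_incl: "P \<in> Ob \<Longrightarrow> Q \<in> Ob \<Longrightarrow> P \<subseteq> Q \<Longrightarrow> mor P Q (L_dlt L P Q \<one>) = L_dlt L (obj P) (obj Q) \<one>"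
  using Psi_AutI unfolding AutI_typ_def by blast

lemma mor_L_iso:
  assumes X: "X \<in> Ob" and Y: "Y \<in> Ob" and f: "L_iso L X Y f"
  shows "L_iso L (obj X) (obj Y) (mor X Y f)"
proof -
  obtain g where fm: "f \<in> L_mor L X Y" and gm: "g \<in> L_mor L Y X"
    and e1: "L_cmp L X Y X g f = L_id L X" and e2: "L_cmp L Y X Y f g = L_id L Y"
    using f unfolding L_iso_def by blast
  have "L_cmp L (obj X) (obj Y) (obj X) (mor Y X g) (mor X Y f) = L_id L (obj X)"
    using mor_comp[OF X Y X fm gm] e1 mor_id[OF X] by simp
  moreover have "L_cmp L (obj Y) (obj X) (obj Y) (mor X Y f) (mor Y X g) = L_id L (obj Y)"
    using mor_comp[OF Y X Y gm fm] e2 mor_id[OF Y] by simp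
  ultimately show ?thesis unfolding L_iso_def using mor_mor[OF X Y fm] mor_mor[OF Y X gm] by blast
qed

text \<open>Some F-centric P is sent onto S up to isomorphism; projecting to F gives an element of
  Aut_F(S) with image inside obj S, and such elements are onto.\<close>

lemma obj_carrier: "obj (carrier S) = carrier S"
proof -
  let ?S = "carrier S"
  obtain P f where P: "P \<in> Ob" and iso: "L_iso L (obj P) ?S f"
    using obj_essentially_surj[OF carrier_Ob] by blast
  obtain g where g: "g \<in> L_mor L ?S (obj P)" using iso unfolding L_iso_def by blast
  have PP: "obj P \<in> Ob" and PS: "obj ?S \<in> Ob" using obj_Ob P carrier_Ob by auto
  have i: "L_dlt L P ?S \<one> \<in> L_mor L P ?S"
    by (rule delta_mor[OF P carrier_Ob transp_one[OF Ob_subgroup[OF P] Ob_subset[OF P]]])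
  let ?h = "L_cmp L ?S (obj P) (obj ?S) (mor P ?S (L_dlt L P ?S \<one>)) g"
  have "?h \<in> L_mor L ?S (obj ?S)" by (rule L_comp_mor[OF carrier_Ob PP PS g mor_mor[OF P carrier_Ob i]])
  then have \<phi>: "L_prj L ?S (obj ?S) ?h \<in> F ?S (obj ?S)" by (rule proj_F[OF carrier_Ob PS])
  then have "?S = L_prj L ?S (obj ?S) ?h ` ?S"
    using F_S_onto F_to_carrier[OF subgroup_self Ob_subgroup[OF PS]] by simp
  also have "\<dots> \<subseteq> obj ?S" using F_mapsto[OF subgroup_self Ob_subgroup[OF PS] \<phi>] by blast
  finally show ?thesis using Ob_subset[OF PS] by blast
qed

definition \<alpha> :: "'g \<Rightarrow> 'g" where
  "\<alpha> g = (THE h. h \<in> carrier S \<and> mor (carrier S) (carrier S) (L_dlt L (carrier S) (carrier S) g) =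
                   L_dlt L (carrier S) (carrier S) h)"

lemma \<alpha>_spec:
  assumes g: "g \<in> carrier S"
  shows "\<alpha> g \<in> carrier S \<and>
    mor (carrier S) (carrier S) (L_dlt L (carrier S) (carrier S) g) = L_dlt L (carrier S) (carrier S) (\<alpha> g)"
proof -
  let ?S = "carrier S"
  have "mor ?S ?S (L_dlt L ?S ?S g) \<in> L_dlt L ?S ?S ` ?S"
    using mor_delta_image[OF carrier_Ob] obj_carrier g by (metis image_eqI)
  then obtain h where h: "h \<in> ?S" "mor ?S ?S (L_dlt L ?S ?S g) = L_dlt L ?S ?S h" by blast
  have "h' = h" if "h' \<in> ?S \<and> mor ?S ?S (L_dlt L ?S ?S g) = L_dlt L ?S ?S h'" for h'
    using delta_inj[OF carrier_Ob carrier_Ob transp_S_S transp_S_S, of h' h] that h by auto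
  then have "\<alpha> g = h" unfolding \<alpha>_def using h by (intro the_equality) auto
  then show ?thesis using h by simp
qed

lemma \<alpha>_closed: "g \<in> carrier S \<Longrightarrow> \<alpha> g \<in> carrier S"
  using \<alpha>_spec by blast

lemma mor_incl_carrier: "P \<in> Ob \<Longrightarrow> mor P (carrier S) (L_dlt L P (carrier S) \<one>) = L_dlt L (obj P) (carrier S) \<one>"
  using mor_incl[OF _ carrier_Ob Ob_subset] obj_carrier by simp

lemma mor_delta:
  assumes P: "P \<in> Ob" and g: "g \<in> P"
  shows "mor P P (L_dlt L P P g) = L_dlt L (obj P) (obj P) (\<alpha> g) \<and> \<alpha> g \<in> obj P"
proof -
  let ?S = "carrier S"
  have PS: "P \<subseteq> ?S" and gS: "g \<in> ?S" using Ob_subset[OF P] g by auto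
  have PP: "obj P \<in> Ob" and PPS: "obj P \<subseteq> ?S" using obj_Ob[OF P] Ob_subset[OF obj_Ob[OF P]] by auto
  obtain h where h: "h \<in> obj P" "mor P P (L_dlt L P P g) = L_dlt L (obj P) (obj P) h"
    using mor_delta_image[OF P] g by blast
  have incl: "L_dlt L P ?S \<one> \<in> L_mor L P ?S"
    by (rule delta_mor[OF P carrier_Ob transp_one[OF Ob_subgroup[OF P] PS]])
  have "mor P ?S (L_dlt L P ?S g) = mor P ?S (L_cmp L P ?S ?S (L_dlt L ?S ?S g) (L_dlt L P ?S \<one>))"
    using delta_after_incl[OF P carrier_Ob PS gS] by simp
  also have "\<dots> = L_cmp L (obj P) ?S ?S (L_dlt L ?S ?S (\<alpha> g)) (L_dlt L (obj P) ?S \<one>)"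
    using mor_comp[OF P carrier_Ob carrier_Ob incl delta_mor[OF carrier_Ob carrier_Ob transp_S_S[OF gS]]]
      obj_carrier \<alpha>_spec[OF gS] mor_incl_carrier[OF P] by simp
  also have "\<dots> = L_dlt L (obj P) ?S (\<alpha> g)"
    using delta_after_incl[OF PP carrier_Ob PPS \<alpha>_closed[OF gS]] .
  finally have l: "mor P ?S (L_dlt L P ?S g) = L_dlt L (obj P) ?S (\<alpha> g)" .
  have "mor P ?S (L_dlt L P ?S g) = mor P ?S (L_cmp L P P ?S (L_dlt L P ?S \<one>) (L_dlt L P P g))"
    using delta_before_incl[OF P carrier_Ob PS g] by simp
  also have "\<dots> = L_cmp L (obj P) (obj P) ?S (L_dlt L (obj P) ?S \<one>) (L_dlt L (obj P) (obj P) h)"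
    using mor_comp[OF P P carrier_Ob delta_mor[OF P P transp_self[OF Ob_subgroup[OF P] g]] incl]
      obj_carrier h(2) mor_incl_carrier[OF P] by simp
  also have "\<dots> = L_dlt L (obj P) ?S h" using delta_before_incl[OF PP carrier_Ob PPS h(1)] .
  finally have "L_dlt L (obj P) ?S (\<alpha> g) = L_dlt L (obj P) ?S h" using l by simp
  then have "\<alpha> g = h"
    using delta_inj[OF PP carrier_Ob transp_carrier[OF PPS \<alpha>_closed[OF gS]] transp_carrier[OF PPS]] h(1) PPS
    by blast
  then show ?thesis using h by simp
qed

lemma obj_eq_\<alpha>_image: assumes P: "P \<in> Ob" shows "obj P = \<alpha> ` P"
proof
  show "\<alpha> ` P \<subseteq> obj P" using mor_delta[OF P] by blast
  show "obj P \<subseteq> \<alpha> ` P"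
  proof
    fix y assume y: "y \<in> obj P"
    have PP: "obj P \<in> Ob" using obj_Ob[OF P] .
    have "L_dlt L (obj P) (obj P) y \<in> mor P P ` L_dlt L P P ` P" using mor_delta_image[OF P] y by blast
    then obtain g where g: "g \<in> P" "L_dlt L (obj P) (obj P) y = mor P P (L_dlt L P P g)" by blast
    then have "L_dlt L (obj P) (obj P) y = L_dlt L (obj P) (obj P) (\<alpha> g)" and ag: "\<alpha> g \<in> obj P"
      using mor_delta[OF P g(1)] by auto
    then have "y = \<alpha> g"
      using delta_inj[OF PP PP transp_self[OF Ob_subgroup[OF PP] y] transp_self[OF Ob_subgroup[OF PP] ag]]
      by blast
    then show "y \<in> \<alpha> ` P" using g by blast
  qed
qed

lemma obj_mono: "P \<in> Ob \<Longrightarrow> Q \<in> Ob \<Longrightarrow> P \<subseteq> Q \<Longrightarrow> obj P \<subseteq> obj Q"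
  using obj_eq_\<alpha>_image by (metis image_mono)

lemma \<alpha>_image_carrier: "\<alpha> ` carrier S = carrier S"
  using obj_eq_\<alpha>_image[OF carrier_Ob] obj_carrier by simp

lemma \<alpha>_mult:
  assumes a: "a \<in> carrier S" and b: "b \<in> carrier S"
  shows "\<alpha> (a \<otimes> b) = \<alpha> a \<otimes> \<alpha> b"
proof -
  let ?S = "carrier S"
  have m: "\<And>x. x \<in> ?S \<Longrightarrow> L_dlt L ?S ?S x \<in> L_mor L ?S ?S"
    using delta_mor[OF carrier_Ob carrier_Ob transp_S_S] .
  have "L_dlt L ?S ?S (\<alpha> (a \<otimes> b)) = mor ?S ?S (L_dlt L ?S ?S (a \<otimes> b))" using \<alpha>_spec[of "a \<otimes> b"] a b by simp
  also have "\<dots> = mor ?S ?S (L_cmp L ?S ?S ?S (L_dlt L ?S ?S a) (L_dlt L ?S ?S b))"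
    using delta_comp[OF carrier_Ob carrier_Ob carrier_Ob transp_S_S[OF b] transp_S_S[OF a]] by simp
  also have "\<dots> = L_cmp L ?S ?S ?S (L_dlt L ?S ?S (\<alpha> a)) (L_dlt L ?S ?S (\<alpha> b))"
    using mor_comp[OF carrier_Ob carrier_Ob carrier_Ob m[OF b] m[OF a]] obj_carrier \<alpha>_spec[OF a] \<alpha>_spec[OF b]
    by simp
  also have "\<dots> = L_dlt L ?S ?S (\<alpha> a \<otimes> \<alpha> b)"
    using delta_comp[OF carrier_Ob carrier_Ob carrier_Ob transp_S_S[OF \<alpha>_closed[OF b]]
        transp_S_S[OF \<alpha>_closed[OF a]]]
    by simp
  finally show ?thesis
    using delta_inj[OF carrier_Ob carrier_Ob transp_S_S transp_S_S] a b \<alpha>_closed by (meson m_closed)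
qed

lemma \<alpha>_inj_on: "inj_on \<alpha> (carrier S)"
proof (rule inj_onI)
  let ?S = "carrier S"
  fix a b assume a: "a \<in> ?S" and b: "b \<in> ?S" and e: "\<alpha> a = \<alpha> b"
  have "mor ?S ?S (L_dlt L ?S ?S a) = mor ?S ?S (L_dlt L ?S ?S b)" using \<alpha>_spec[OF a] \<alpha>_spec[OF b] e by simp
  then have "L_dlt L ?S ?S a = L_dlt L ?S ?S b"
    using mor_bij[OF carrier_Ob carrier_Ob] delta_mor[OF carrier_Ob carrier_Ob transp_S_S[OF a]]
      delta_mor[OF carrier_Ob carrier_Ob transp_S_S[OF b]]
    unfolding bij_betw_def by (auto dest: inj_onD)
  then show "a = b" using delta_inj[OF carrier_Ob carrier_Ob transp_S_S[OF a] transp_S_S[OF b]] by blast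
qed

definition \<alpha>' :: "'g \<Rightarrow> 'g" where "\<alpha>' = inv_into (carrier S) \<alpha>"

lemma aut_pair_\<alpha>: "aut_pair S \<alpha> \<alpha>'"
proof
  fix x y assume x: "x \<in> carrier S" and y: "y \<in> carrier S"
  show "\<alpha> x \<in> carrier S" by (rule \<alpha>_closed[OF x])
  show "\<alpha>' x \<in> carrier S" unfolding \<alpha>'_def using \<alpha>_image_carrier x by (metis inv_into_into)
  show "\<alpha>' (\<alpha> x) = x" unfolding \<alpha>'_def using \<alpha>_inj_on x by (simp add: inv_into_f_f)
  show "\<alpha> (\<alpha>' x) = x" unfolding \<alpha>'_def using \<alpha>_image_carrier x by (simp add: f_inv_into_f)
  show "\<alpha> (x \<otimes> y) = \<alpha> x \<otimes> \<alpha> y" by (rule \<alpha>_mult[OF x y])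
qed

sublocale \<alpha>: plcg_aut p S F L \<alpha> \<alpha>'
  using plcg_axioms aut_pair_\<alpha> by (simp add: plcg_aut_def)

text \<open>Apply \<Psi> to axiom (C) for f, compare with axiom (C) for \<Psi> f, and cancel \<Psi> f.\<close>

lemma proj_mor:
  assumes P: "P \<in> Ob" and Q: "Q \<in> Ob" and f: "f \<in> L_mor L P Q"
  shows "L_prj L (obj P) (obj Q) (mor P Q f) = transport \<alpha> \<alpha>' P (L_prj L P Q f)"
proof
  fix y
  let ?\<phi> = "L_prj L P Q f" and ?\<psi> = "L_prj L (obj P) (obj Q) (mor P Q f)"
  have PP: "obj P \<in> Ob" and QQ: "obj Q \<in> Ob" using obj_Ob P Q by auto
  have Pf: "mor P Q f \<in> L_mor L (obj P) (obj Q)" by (rule mor_mor[OF P Q f])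
  note \<phi> = F_mapsto[OF Ob_subgroup[OF P] Ob_subgroup[OF Q] proj_F[OF P Q f]]
  note \<psi> = injhomD[OF F_injhom[OF Ob_subgroup[OF PP] Ob_subgroup[OF QQ] proj_F[OF PP QQ Pf]]]
  show "?\<psi> y = transport \<alpha> \<alpha>' P ?\<phi> y"
  proof (cases "y \<in> \<alpha> ` P")
    case False
    then show ?thesis using \<psi>(1) obj_eq_\<alpha>_image[OF P] by (simp add: extensional_def transport_def)
  next
    case True
    then obtain g where g: "g \<in> P" and yg: "y = \<alpha> g" by blast
    have gS: "g \<in> carrier S" using g Ob_subset[OF P] by auto
    have dP: "L_dlt L P P g \<in> L_mor L P P" by (rule delta_mor[OF P P transp_self[OF Ob_subgroup[OF P] g]])
    have dQ: "L_dlt L Q Q (?\<phi> g) \<in> L_mor L Q Q"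
      by (rule delta_mor[OF Q Q transp_self[OF Ob_subgroup[OF Q] \<phi>[OF g]]])
    have "L_cmp L (obj P) (obj Q) (obj Q) (L_dlt L (obj Q) (obj Q) (?\<psi> (\<alpha> g))) (mor P Q f)
        = L_cmp L (obj P) (obj P) (obj Q) (mor P Q f) (L_dlt L (obj P) (obj P) (\<alpha> g))"
      using comp_delta[OF PP QQ Pf] mor_delta[OF P g] by simp
    also have "\<dots> = mor P Q (L_cmp L P P Q f (L_dlt L P P g))"
      using mor_comp[OF P P Q dP f] mor_delta[OF P g] by simp
    also have "\<dots> = mor P Q (L_cmp L P Q Q (L_dlt L Q Q (?\<phi> g)) f)" using comp_delta[OF P Q f g] by simp
    also have "\<dots> = L_cmp L (obj P) (obj Q) (obj Q) (L_dlt L (obj Q) (obj Q) (\<alpha> (?\<phi> g))) (mor P Q f)"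
      using mor_comp[OF P Q Q f dQ] mor_delta[OF Q \<phi>[OF g]] by simp
    finally have "?\<psi> (\<alpha> g) = \<alpha> (?\<phi> g)"
      using delta_comp_cancel[OF PP QQ Pf] \<psi>(2) mor_delta[OF P g] mor_delta[OF Q \<phi>[OF g]] by blast
    then show ?thesis using yg True gS by (simp add: transport_def \<alpha>.\<gamma>'_\<gamma>)
  qed
qed

lemma \<alpha>_Ob: "P \<in> Ob \<Longrightarrow> \<alpha> ` P \<in> Ob"
  using obj_eq_\<alpha>_image obj_Ob by metis

lemma F_\<alpha>_image:
  assumes P: "P \<in> Ob" and Q: "Q \<in> Ob"
  shows "F (\<alpha> ` P) (\<alpha> ` Q) = transport \<alpha> \<alpha>' P ` F P Q"
proof -
  have "F (\<alpha> ` P) (\<alpha> ` Q) = L_prj L (obj P) (obj Q) ` mor P Q ` L_mor L P Q"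
    using proj_onto[OF obj_Ob[OF P] obj_Ob[OF Q]] obj_eq_\<alpha>_image[OF P] obj_eq_\<alpha>_image[OF Q]
      mor_bij[OF P Q] by (simp add: bij_betw_def)
  also have "\<dots> = transport \<alpha> \<alpha>' P ` L_prj L P Q ` L_mor L P Q"
    unfolding image_image using proj_mor[OF P Q] by simp
  finally show ?thesis using proj_onto[OF P Q] by simp
qed

sublocale \<alpha>: fusion_aut p S F L \<alpha> \<alpha>'
  by unfold_locales (simp_all add: \<alpha>_Ob F_\<alpha>_image)

lemma \<alpha>'_Ob:
  assumes Q: "Q \<in> Ob"
  shows "\<alpha>' ` Q \<in> Ob"
proof -
  obtain P f where P: "P \<in> Ob" and iso: "L_iso L (obj P) Q f" using obj_essentially_surj[OF Q] by blast
  have PP: "obj P \<in> Ob" using obj_Ob[OF P] .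
  have fm: "f \<in> L_mor L (obj P) Q" using iso unfolding L_iso_def by blast
  let ?\<psi> = "L_prj L (obj P) Q f"
  have "?\<psi> \<in> F (\<alpha> ` P) (\<alpha> ` carrier S)"
    using F_to_carrier[OF Ob_subgroup[OF PP] Ob_subgroup[OF Q] proj_F[OF PP Q fm]]
      obj_eq_\<alpha>_image[OF P] \<alpha>_image_carrier by simp
  then obtain \<phi> where \<phi>: "\<phi> \<in> F P (carrier S)" and \<psi>\<phi>: "?\<psi> = transport \<alpha> \<alpha>' P \<phi>"
    using F_\<alpha>_image[OF P carrier_Ob] by blast
  have "Q = \<alpha> ` \<phi> ` P"
    using L_iso_proj_image[OF PP Q iso] obj_eq_\<alpha>_image[OF P] \<psi>\<phi> \<alpha>.transport_image[OF Ob_subset[OF P]]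
      F_mapsto[OF Ob_subgroup[OF P] subgroup_self \<phi>] by simp
  then have "\<alpha>' ` Q = \<phi> ` P"
    using \<alpha>.\<gamma>'_\<gamma>_image F_mapsto[OF Ob_subgroup[OF P] subgroup_self \<phi>] by (simp add: image_subset_iff)
  then show ?thesis using F_image_Ob[OF P \<phi>] by simp
qed

lemma F_\<alpha>'_image:
  assumes P: "P \<in> Ob" and Q: "Q \<in> Ob"
  shows "F (\<alpha>' ` P) (\<alpha>' ` Q) = transport \<alpha>' \<alpha> P ` F P Q"
proof -
  let ?P = "\<alpha>' ` P" and ?Q = "\<alpha>' ` Q"
  have P': "?P \<in> Ob" and Q': "?Q \<in> Ob" using \<alpha>'_Ob P Q by auto
  interpret inv: aut_pair S \<alpha>' \<alpha> by (rule \<alpha>.aut_pair_swap)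
  have PP: "\<alpha> ` ?P = P" and QQ: "\<alpha> ` ?Q = Q"
    using inv.\<gamma>'_\<gamma>_image Ob_subset[OF P] Ob_subset[OF Q] by auto
  have "transport \<alpha>' \<alpha> P ` F P Q = transport \<alpha>' \<alpha> P ` transport \<alpha> \<alpha>' ?P ` F ?P ?Q"
    using F_\<alpha>_image[OF P' Q'] PP QQ by simp
  also have "\<dots> = (\<lambda>a. a) ` F ?P ?Q"
    unfolding image_image
  proof (rule image_cong[OF refl])
    fix a assume a: "a \<in> F ?P ?Q"
    note a' = injhomD(1,2)[OF F_injhom[OF Ob_subgroup[OF P'] Ob_subgroup[OF Q'] a]]
    have "transport \<alpha>' \<alpha> (\<alpha> ` ?P) (transport \<alpha> \<alpha>' ?P a) = a"
      by (rule \<alpha>.transport_transport[OF Ob_subset[OF P'] a'(1)]) (use a'(2) Ob_subset[OF Q'] in blast)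
    then show "transport \<alpha>' \<alpha> P (transport \<alpha> \<alpha>' ?P a) = a" unfolding PP .
  qed
  finally show ?thesis by simp
qed

sublocale \<alpha>': fusion_aut p S F L \<alpha>' \<alpha>
proof -
  interpret plcg_aut p S F L \<alpha>' \<alpha> by (rule \<alpha>.plcg_aut_swap)
  show "fusion_aut p S F L \<alpha>' \<alpha>" by unfold_locales (simp_all add: \<alpha>'_Ob F_\<alpha>'_image)
qed

lemma \<alpha>_\<alpha>'_image: "Q \<subseteq> carrier S \<Longrightarrow> \<alpha> ` \<alpha>' ` Q = Q"
  using \<alpha>'.\<gamma>'_\<gamma>_image .

lemma nfs_conj_obj_iff:
  assumes P: "P \<in> Ob" and Q: "Q \<in> Ob"
  shows "obj Q \<in> nfs_conj S F (obj P) \<longleftrightarrow> Q \<in> nfs_conj S F P"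
proof
  assume "obj Q \<in> nfs_conj S F (obj P)"
  then have "\<alpha>' ` \<alpha> ` Q \<in> nfs_conj S F (\<alpha>' ` \<alpha> ` P)"
    using \<alpha>'.nfs_conj_\<gamma>_image[OF Ob_subgroup[OF obj_Ob[OF P]]] obj_eq_\<alpha>_image P Q by simp
  then show "Q \<in> nfs_conj S F P" using \<alpha>.\<gamma>'_\<gamma>_image Ob_subset P Q by simp
next
  assume "Q \<in> nfs_conj S F P"
  then show "obj Q \<in> nfs_conj S F (obj P)"
    using \<alpha>.nfs_conj_\<gamma>_image[OF Ob_subgroup[OF P]] obj_eq_\<alpha>_image P Q by simp
qed

lemma centric_radical_\<alpha>'_image:
  assumes "F_centric S F Q" "F_radical p S F Q"
  shows "\<alpha>' ` Q \<in> Ob" "F_radical p S F (\<alpha>' ` Q)"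
  using assms \<alpha>'_Ob \<alpha>'.F_radical_\<gamma>_image by (simp_all add: L_ob_def)

lemma complete_fcf_obj:
  assumes cf: "complete_fcf p S F P k"
  shows "complete_fcf p S F (\<lambda>i. obj (P i)) k"
proof -
  have P0: "P 0 = carrier S" and fn: "\<And>i. i \<le> k \<Longrightarrow> fully_normalized p S F (P i)"
    and cr: "\<And>i. i \<le> k \<Longrightarrow> F_centric S F (P i) \<and> F_radical p S F (P i)"
    and cov: "\<And>Q. F_centric S F Q \<Longrightarrow> F_radical p S F Q \<Longrightarrow> \<exists>i\<le>k. P i \<in> fconj S F Q"
    and cov': "\<And>Q. F_centric S F Q \<Longrightarrow> F_radical p S F Q \<Longrightarrow> \<exists>i\<le>k. P i \<in> nfs_conj S F Q"
    and dis: "\<And>i j. i \<le> k \<Longrightarrow> j \<le> k \<Longrightarrow> P j \<in> nfs_conj S F (P i) \<Longrightarrow> i = j"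
    using cf unfolding complete_fcf_def fusion_controlling_family_def by blast+
  have Ob: "\<And>i. i \<le> k \<Longrightarrow> P i \<in> Ob" using cr by (simp add: L_ob_def)
  show ?thesis unfolding complete_fcf_def fusion_controlling_family_def
  proof (intro conjI allI impI)
    show "obj (P 0) = carrier S" using P0 obj_carrier by simp
  next
    fix i assume i: "i \<le> k"
    show "fully_normalized p S F (obj (P i))"
      using \<alpha>.fully_normalized_\<gamma>_image[OF Ob[OF i] fn[OF i]] obj_eq_\<alpha>_image[OF Ob[OF i]] by simp
    show "F_centric S F (obj (P i))" using obj_Ob[OF Ob[OF i]] by (simp add: L_ob_def)
    show "F_radical p S F (obj (P i))"
      using \<alpha>.F_radical_\<gamma>_image[OF Ob[OF i]] cr[OF i] obj_eq_\<alpha>_image[OF Ob[OF i]] by simp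
  next
    fix Q assume Q: "F_centric S F Q \<and> F_radical p S F Q"
    note Q' = centric_radical_\<alpha>'_image[OF Q[THEN conjunct1] Q[THEN conjunct2]]
    have QS: "Q \<subseteq> carrier S" using Q by (simp add: F_centric_def subgroup.subset)
    obtain i where i: "i \<le> k" and "P i \<in> fconj S F (\<alpha>' ` Q)"
      using cov Q' by (auto simp: L_ob_def)
    then have "\<alpha> ` P i \<in> fconj S F Q" using \<alpha>.fconj_\<gamma>_image[OF Q'(1)] \<alpha>_\<alpha>'_image[OF QS] by auto
    then show "\<exists>i\<le>k. obj (P i) \<in> fconj S F Q" using i obj_eq_\<alpha>_image[OF Ob[OF i]] by auto
    obtain j where j: "j \<le> k" and "P j \<in> nfs_conj S F (\<alpha>' ` Q)"
      using cov' Q' by (auto simp: L_ob_def)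
    then have "\<alpha> ` P j \<in> nfs_conj S F Q"
      using \<alpha>.nfs_conj_\<gamma>_image[OF Ob_subgroup[OF Q'(1)]] \<alpha>_\<alpha>'_image[OF QS] by auto
    then show "\<exists>i\<le>k. obj (P i) \<in> nfs_conj S F Q" using j obj_eq_\<alpha>_image[OF Ob[OF j]] by auto
  next
    fix i j assume "i \<le> k" "j \<le> k" "obj (P j) \<in> nfs_conj S F (obj (P i))"
    then show "i = j" using dis nfs_conj_obj_iff Ob by blast
  qed
qed

end

context plcg
begin

lemma F_S_subgroup_image:
  assumes \<beta>: "\<beta> \<in> F (carrier S) (carrier S)" and X: "subgroup X S"
  shows "subgroup (\<beta> ` X) S"
proof -
  have "\<beta> \<in> hom S S" using F_injhom[OF subgroup_self subgroup_self \<beta>] by (simp add: injhom_def)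
  then have "group_hom S S \<beta>" by (intro group_hom.intro group_hom_axioms.intro is_group)
  then show ?thesis by (rule group_hom.subgroup_img_is_subgroup[OF _ X])
qed

lemma nfs_hom_restrict:
  "nfs_hom S F Q R \<phi> \<Longrightarrow> \<exists>\<beta>\<in>F (carrier S) (carrier S). \<beta> ` Q \<subseteq> R \<and> \<phi> = restrict \<beta> Q"
proof (induction rule: nfs_hom.induct)
  case (restr \<alpha> Q R)
  then show ?case by blast
next
  case (comp Q R \<phi> T \<psi>)
  obtain \<beta>1 where b1: "\<beta>1 \<in> F (carrier S) (carrier S)" "\<beta>1 ` Q \<subseteq> R" "\<phi> = restrict \<beta>1 Q"
    using comp by blast
  obtain \<beta>2 where b2: "\<beta>2 \<in> F (carrier S) (carrier S)" "\<beta>2 ` R \<subseteq> T" "\<psi> = restrict \<beta>2 R"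
    using comp by blast
  have QS: "Q \<subseteq> carrier S" using nfs_hom_subgroups[OF comp(1)] subgroup.subset by blast
  have "restrict (\<psi> \<circ> \<phi>) Q = restrict (restrict (\<beta>2 \<circ> \<beta>1) (carrier S)) Q"
    using b1 b2 QS by (auto simp: fun_eq_iff subset_iff)
  moreover have "restrict (\<beta>2 \<circ> \<beta>1) (carrier S) ` Q \<subseteq> T" using b1 b2 QS by auto
  ultimately show ?case using F_comp[OF subgroup_self subgroup_self subgroup_self b1(1) b2(1)] by blast
qed

lemma nfs_conj_eq:
  assumes X: "subgroup X S"
  shows "nfs_conj S F X = (\<lambda>\<beta>. \<beta> ` X) ` F (carrier S) (carrier S)"
proof
  show "nfs_conj S F X \<subseteq> (\<lambda>\<beta>. \<beta> ` X) ` F (carrier S) (carrier S)"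
  proof
    fix Y assume "Y \<in> nfs_conj S F X"
    then obtain \<phi> where \<phi>: "nfs_hom S F X (carrier S) \<phi>" and Y: "Y = \<phi> ` X" unfolding nfs_conj_def by blast
    obtain \<beta> where "\<beta> \<in> F (carrier S) (carrier S)" "\<phi> = restrict \<beta> X" using nfs_hom_restrict[OF \<phi>] by blast
    then show "Y \<in> (\<lambda>\<beta>. \<beta> ` X) ` F (carrier S) (carrier S)" using Y by auto
  qed
  show "(\<lambda>\<beta>. \<beta> ` X) ` F (carrier S) (carrier S) \<subseteq> nfs_conj S F X"
  proof
    fix Y assume "Y \<in> (\<lambda>\<beta>. \<beta> ` X) ` F (carrier S) (carrier S)"
    then obtain \<beta> where b: "\<beta> \<in> F (carrier S) (carrier S)" and Y: "Y = \<beta> ` X" by blast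
    have "\<beta> ` X \<subseteq> carrier S" using F_mapsto[OF subgroup_self subgroup_self b] subgroup.subset[OF X] by blast
    then have "nfs_hom S F X (carrier S) (restrict \<beta> X)" using nfs_hom.restr b X subgroup_self by blast
    moreover have "restrict \<beta> X ` X = Y" using Y by auto
    ultimately show "Y \<in> nfs_conj S F X" unfolding nfs_conj_def by blast
  qed
qed

lemma nfs_conj_trans:
  assumes X: "subgroup X S" and Y: "Y \<in> nfs_conj S F X" and Z: "Z \<in> nfs_conj S F Y"
  shows "Z \<in> nfs_conj S F X"
proof -
  obtain \<beta>1 where b1: "\<beta>1 \<in> F (carrier S) (carrier S)" and Yd: "Y = \<beta>1 ` X"
    using Y unfolding nfs_conj_eq[OF X] by blast
  have Ys: "subgroup Y S" using F_S_subgroup_image[OF b1 X] Yd by simp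
  obtain \<beta>2 where b2: "\<beta>2 \<in> F (carrier S) (carrier S)" and Zd: "Z = \<beta>2 ` Y"
    using Z unfolding nfs_conj_eq[OF Ys] by blast
  have "Z = restrict (\<beta>2 \<circ> \<beta>1) (carrier S) ` X" using Yd Zd subgroup.subset[OF X] by auto
  then show ?thesis
    unfolding nfs_conj_eq[OF X] using F_comp[OF subgroup_self subgroup_self subgroup_self b1 b2] by blast
qed

lemma nfs_conj_sym:
  assumes X: "subgroup X S" and Y: "Y \<in> nfs_conj S F X"
  shows "X \<in> nfs_conj S F Y"
proof -
  obtain \<beta> where b: "\<beta> \<in> F (carrier S) (carrier S)" and Yd: "Y = \<beta> ` X"
    using Y unfolding nfs_conj_eq[OF X] by blast
  have Ys: "subgroup Y S" using F_S_subgroup_image[OF b X] Yd by simp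
  have "restrict (inv_into (carrier S) \<beta>) (carrier S) \<in> F (carrier S) (carrier S)"
    using F_inverse[OF subgroup_self subgroup_self b] F_S_onto[OF b] by simp
  moreover have "restrict (inv_into (carrier S) \<beta>) (carrier S) ` Y = X"
  proof -
    have "restrict (inv_into (carrier S) \<beta>) (carrier S) ` Y = (\<lambda>x. x) ` X"
      unfolding Yd image_image
      using F_mapsto[OF subgroup_self subgroup_self b] subgroup.subset[OF X]
        inv_into_f_f[OF injhomD(3)[OF F_injhom[OF subgroup_self subgroup_self b]]]
      by (intro image_cong) auto
    then show ?thesis by simp
  qed
  ultimately show ?thesis unfolding nfs_conj_eq[OF Ys] by blast
qed

end

lemma fst_fcomp: "fst (fcomp \<Psi> \<Phi>) P = fst \<Psi> (fst \<Phi> P)"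
  by (simp add: fcomp_def)

lemma snd_fcomp: "snd (fcomp \<Psi> \<Phi>) P Q f = snd \<Psi> (fst \<Phi> P) (fst \<Phi> Q) (snd \<Phi> P Q f)"
  by (simp add: fcomp_def)

context plcg
begin

lemma isotypicalI: "\<Psi> \<in> AutI_typ S F L \<Longrightarrow> isotypical p S F L \<Psi>"
  using plcg_axioms by (simp add: isotypical_def isotypical_axioms_def)

lemma nat_iso_refl:
  assumes \<Psi>: "\<Psi> \<in> AutI_typ S F L"
  shows "nat_iso Ob L \<Psi> \<Psi>"
proof -
  interpret isotypical p S F L \<Psi> by (rule isotypicalI[OF \<Psi>])
  have "L_iso L (obj P) (obj P) (L_id L (obj P))" if P: "P \<in> Ob" for P
    unfolding L_iso_def using L_id_mor[OF obj_Ob[OF P]] L_comp_id_left[OF obj_Ob[OF P] obj_Ob[OF P]] by blast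
  moreover have "L_cmp L (obj P) (obj Q) (obj Q) (L_id L (obj Q)) (mor P Q f) =
        L_cmp L (obj P) (obj P) (obj Q) (mor P Q f) (L_id L (obj P))"
    if P: "P \<in> Ob" and Q: "Q \<in> Ob" and f: "f \<in> L_mor L P Q" for P Q f
    using L_comp_id_left[OF obj_Ob[OF P] obj_Ob[OF Q] mor_mor[OF P Q f]]
      L_comp_id_right[OF obj_Ob[OF P] obj_Ob[OF Q] mor_mor[OF P Q f]] by simp
  ultimately show ?thesis unfolding nat_iso_def by (intro exI[of _ "\<lambda>P. L_id L (obj P)"]) blast
qed

text \<open>Naturality at the inclusion of X into S shows that the component at S, an element of
  Aut_L(S), projects to an element of Aut_F(S) carrying Theta(X) onto Psi(X).\<close>

lemma nat_iso_nfs_conj: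
  assumes \<Theta>: "\<Theta> \<in> AutI_typ S F L" and \<Psi>: "\<Psi> \<in> AutI_typ S F L" and ni: "nat_iso Ob L \<Theta> \<Psi>"
    and X: "X \<in> Ob"
  shows "fst \<Psi> X \<in> nfs_conj S F (fst \<Theta> X)"
proof -
  interpret T: isotypical p S F L \<Theta> by (rule isotypicalI[OF \<Theta>])
  interpret U: isotypical p S F L \<Psi> by (rule isotypicalI[OF \<Psi>])
  let ?S = "carrier S"
  obtain \<eta> where iso: "\<And>P. P \<in> Ob \<Longrightarrow> L_iso L (fst \<Theta> P) (fst \<Psi> P) (\<eta> P)"
    and nat: "\<And>P Q f. P \<in> Ob \<Longrightarrow> Q \<in> Ob \<Longrightarrow> f \<in> L_mor L P Q \<Longrightarrow>
        L_cmp L (fst \<Theta> P) (fst \<Theta> Q) (fst \<Psi> Q) (\<eta> Q) (snd \<Theta> P Q f) =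
        L_cmp L (fst \<Theta> P) (fst \<Psi> P) (fst \<Psi> Q) (snd \<Psi> P Q f) (\<eta> P)"
    using ni unfolding nat_iso_def by blast
  have TX: "fst \<Theta> X \<in> Ob" and UX: "fst \<Psi> X \<in> Ob" using T.obj_Ob U.obj_Ob X by auto
  have incl: "L_dlt L X ?S \<one> \<in> L_mor L X ?S"
    by (rule delta_mor[OF X carrier_Ob transp_one[OF Ob_subgroup[OF X] Ob_subset[OF X]]])
  have \<eta>S: "\<eta> ?S \<in> L_mor L ?S ?S"
    using iso[OF carrier_Ob] T.obj_carrier U.obj_carrier unfolding L_iso_def by simp
  have \<eta>X: "\<eta> X \<in> L_mor L (fst \<Theta> X) (fst \<Psi> X)" using iso[OF X] unfolding L_iso_def by blast
  have "L_cmp L (fst \<Theta> X) ?S ?S (\<eta> ?S) (L_dlt L (fst \<Theta> X) ?S \<one>) =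
        L_cmp L (fst \<Theta> X) (fst \<Psi> X) ?S (L_dlt L (fst \<Psi> X) ?S \<one>) (\<eta> X)"
    using nat[OF X carrier_Ob incl] T.mor_incl_carrier[OF X] U.mor_incl_carrier[OF X] T.obj_carrier U.obj_carrier
    by simp
  then have "restrict (L_prj L ?S ?S (\<eta> ?S)) (fst \<Theta> X) = L_prj L (fst \<Theta> X) (fst \<Psi> X) (\<eta> X)"
    using proj_after_incl[OF TX \<eta>S] proj_before_incl[OF TX UX \<eta>X] by simp
  then have "L_prj L ?S ?S (\<eta> ?S) ` fst \<Theta> X = fst \<Psi> X"
    using L_iso_proj_image[OF TX UX iso[OF X]] by (metis image_restrict_eq)
  then show ?thesis
    unfolding nfs_conj_eq[OF Ob_subgroup[OF TX]] using proj_F[OF carrier_Ob carrier_Ob \<eta>S] by blast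
qed

context
  fixes \<Psi> \<Phi> assumes \<Psi>: "\<Psi> \<in> AutI_typ S F L" and \<Phi>: "\<Phi> \<in> AutI_typ S F L"
begin

interpretation A: isotypical p S F L \<Psi> by (rule isotypicalI[OF \<Psi>])
interpretation B: isotypical p S F L \<Phi> by (rule isotypicalI[OF \<Phi>])

lemma fcomp_is_functor: "is_functor Ob L (fcomp \<Psi> \<Phi>)"
  unfolding is_functor_def fst_fcomp snd_fcomp
proof (intro conjI ballI)
  fix P assume P: "P \<in> Ob"
  show "fst \<Psi> (fst \<Phi> P) \<in> Ob" using A.obj_Ob B.obj_Ob P by blast
  show "snd \<Psi> (fst \<Phi> P) (fst \<Phi> P) (snd \<Phi> P P (L_id L P)) = L_id L (fst \<Psi> (fst \<Phi> P))"
    using B.mor_id[OF P] A.mor_id[OF B.obj_Ob[OF P]] by simp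
next
  fix P Q f assume P: "P \<in> Ob" and Q: "Q \<in> Ob" and f: "f \<in> L_mor L P Q"
  show "snd \<Psi> (fst \<Phi> P) (fst \<Phi> Q) (snd \<Phi> P Q f) \<in> L_mor L (fst \<Psi> (fst \<Phi> P)) (fst \<Psi> (fst \<Phi> Q))"
    using B.mor_mor[OF P Q f] A.mor_mor[OF B.obj_Ob[OF P] B.obj_Ob[OF Q]] by blast
next
  fix P Q R f g assume P: "P \<in> Ob" and Q: "Q \<in> Ob" and R: "R \<in> Ob" and f: "f \<in> L_mor L P Q"
    and g: "g \<in> L_mor L Q R"
  show "snd \<Psi> (fst \<Phi> P) (fst \<Phi> R) (snd \<Phi> P R (L_cmp L P Q R g f)) =
     L_cmp L (fst \<Psi> (fst \<Phi> P)) (fst \<Psi> (fst \<Phi> Q)) (fst \<Psi> (fst \<Phi> R))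
      (snd \<Psi> (fst \<Phi> Q) (fst \<Phi> R) (snd \<Phi> Q R g)) (snd \<Psi> (fst \<Phi> P) (fst \<Phi> Q) (snd \<Phi> P Q f))"
    using B.mor_comp[OF P Q R f g]
      A.mor_comp[OF B.obj_Ob[OF P] B.obj_Ob[OF Q] B.obj_Ob[OF R] B.mor_mor[OF P Q f] B.mor_mor[OF Q R g]]
    by simp
qed

lemma fcomp_self_equivalence: "self_equivalence Ob L (fcomp \<Psi> \<Phi>)"
  unfolding self_equivalence_def
proof (intro conjI ballI)
  show "is_functor Ob L (fcomp \<Psi> \<Phi>)" by (rule fcomp_is_functor)
next
  fix P Q assume P: "P \<in> Ob" and Q: "Q \<in> Ob"
  have "bij_betw (snd \<Psi> (fst \<Phi> P) (fst \<Phi> Q) \<circ> snd \<Phi> P Q) (L_mor L P Q)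
      (L_mor L (fst \<Psi> (fst \<Phi> P)) (fst \<Psi> (fst \<Phi> Q)))"
    by (rule bij_betw_trans[OF B.mor_bij[OF P Q] A.mor_bij[OF B.obj_Ob[OF P] B.obj_Ob[OF Q]]])
  then show "bij_betw (snd (fcomp \<Psi> \<Phi>) P Q) (L_mor L P Q) (L_mor L (fst (fcomp \<Psi> \<Phi>) P) (fst (fcomp \<Psi> \<Phi>) Q))"
    unfolding fst_fcomp snd_fcomp by (simp add: comp_def)
next
  fix Q assume Q: "Q \<in> Ob"
  obtain P1 f1 where P1: "P1 \<in> Ob" and f1: "L_iso L (fst \<Psi> P1) Q f1"
    using A.obj_essentially_surj[OF Q] by blast
  obtain P2 f2 where P2: "P2 \<in> Ob" and f2: "L_iso L (fst \<Phi> P2) P1 f2"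
    using B.obj_essentially_surj[OF P1] by blast
  have "L_iso L (fst \<Psi> (fst \<Phi> P2)) (fst \<Psi> P1) (snd \<Psi> (fst \<Phi> P2) P1 f2)"
    by (rule A.mor_L_iso[OF B.obj_Ob[OF P2] P1 f2])
  then have "L_iso L (fst \<Psi> (fst \<Phi> P2)) Q (L_cmp L (fst \<Psi> (fst \<Phi> P2)) (fst \<Psi> P1) Q f1 (snd \<Psi> (fst \<Phi> P2) P1 f2))"
    by (rule L_iso_comp[OF A.obj_Ob[OF B.obj_Ob[OF P2]] A.obj_Ob[OF P1] Q _ f1])
  then show "\<exists>P\<in>Ob. \<exists>f. L_iso L (fst (fcomp \<Psi> \<Phi>) P) Q f" using P2 unfolding fst_fcomp by blast
qed

lemma fcomp_AutI_typ: "fcomp \<Psi> \<Phi> \<in> AutI_typ S F L"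
  unfolding AutI_typ_def
proof (intro CollectI conjI ballI impI)
  show "self_equivalence Ob L (fcomp \<Psi> \<Phi>)" by (rule fcomp_self_equivalence)
next
  fix P assume P: "P \<in> Ob"
  have "snd (fcomp \<Psi> \<Phi>) P P ` L_dlt L P P ` P = snd \<Psi> (fst \<Phi> P) (fst \<Phi> P) ` snd \<Phi> P P ` L_dlt L P P ` P"
    unfolding snd_fcomp by (simp add: image_image)
  also have "\<dots> = snd \<Psi> (fst \<Phi> P) (fst \<Phi> P) ` L_dlt L (fst \<Phi> P) (fst \<Phi> P) ` fst \<Phi> P"
    using B.mor_delta_image[OF P] by simp
  also have "\<dots> = L_dlt L (fst \<Psi> (fst \<Phi> P)) (fst \<Psi> (fst \<Phi> P)) ` fst \<Psi> (fst \<Phi> P)"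
    using A.mor_delta_image[OF B.obj_Ob[OF P]] by simp
  finally show "snd (fcomp \<Psi> \<Phi>) P P ` L_dlt L P P ` P
      = L_dlt L (fst (fcomp \<Psi> \<Phi>) P) (fst (fcomp \<Psi> \<Phi>) P) ` fst (fcomp \<Psi> \<Phi>) P"
    unfolding fst_fcomp by simp
next
  fix P Q assume P: "P \<in> Ob" and Q: "Q \<in> Ob" and PQ: "P \<subseteq> Q"
  show "snd (fcomp \<Psi> \<Phi>) P Q (L_dlt L P Q \<one>) = L_dlt L (fst (fcomp \<Psi> \<Phi>) P) (fst (fcomp \<Psi> \<Phi>) Q) \<one>"
    unfolding fst_fcomp snd_fcomp
    using B.mor_incl[OF P Q PQ] A.mor_incl[OF B.obj_Ob[OF P] B.obj_Ob[OF Q] B.obj_mono[OF P Q PQ]] by simp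
qed

end


end

section \<open>The permutation of the family\<close>

definition fcf_perm ::
    "'g monoid \<Rightarrow> ('g set \<Rightarrow> 'g set \<Rightarrow> ('g \<Rightarrow> 'g) set) \<Rightarrow> (nat \<Rightarrow> 'g set) \<Rightarrow> nat \<Rightarrow> ('g, 'm) fnctr \<Rightarrow> nat \<Rightarrow> nat"
  where "fcf_perm S F P k \<Psi> i =
    (if i \<in> {1..k} then (THE j. j \<le> k \<and> P j \<in> nfs_conj S F (fst \<Psi> (P i))) else i)"

definition out_perm ::
    "'g monoid \<Rightarrow> ('g set \<Rightarrow> 'g set \<Rightarrow> ('g \<Rightarrow> 'g) set) \<Rightarrow> (nat \<Rightarrow> 'g set) \<Rightarrow> nat \<Rightarrow> ('g, 'm) fnctr set \<Rightarrow> nat \<Rightarrow> nat"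
  where "out_perm S F P k A = fcf_perm S F P k (SOME \<Theta>. \<Theta> \<in> A)"

lemma fcf_perm_outside: "i \<notin> {1..k} \<Longrightarrow> fcf_perm S F P k \<Psi> i = i"
  unfolding fcf_perm_def by (rule if_not_P)

lemma complete_fcf_plcg:
  assumes "p_local_compact_group p S F L" and cf: "complete_fcf p S F P k"
  shows "plcg p S F L"
proof -
  have "P 0 = carrier S" "fully_normalized p S F (P 0)" "F_centric S F (P 0)"
    using cf unfolding complete_fcf_def fusion_controlling_family_def by auto
  then show ?thesis using assms(1) by (simp add: plcg_def)
qed

context plcg
begin

lemma out_class_self: "\<Psi> \<in> AutI_typ S F L \<Longrightarrow> \<Psi> \<in> out_class S F L \<Psi>"
  using nat_iso_refl by (simp add: out_class_def)

context
  fixes P k assumes cf: "complete_fcf p S F P k"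
begin

lemma complete_fcfD:
  "P 0 = carrier S" "\<And>i. i \<le> k \<Longrightarrow> P i \<in> Ob"
  "\<And>i j. i \<le> k \<Longrightarrow> j \<le> k \<Longrightarrow> P j \<in> nfs_conj S F (P i) \<Longrightarrow> i = j"
  "\<And>Q. F_centric S F Q \<Longrightarrow> F_radical p S F Q \<Longrightarrow> \<exists>i\<le>k. P i \<in> nfs_conj S F Q"
  using cf unfolding complete_fcf_def fusion_controlling_family_def L_ob_def by blast+

lemma obj_member_Ob: "\<Psi> \<in> AutI_typ S F L \<Longrightarrow> i \<le> k \<Longrightarrow> fst \<Psi> (P i) \<in> Ob"
  using isotypical.obj_Ob[OF isotypicalI] complete_fcfD(2) by blast

lemma nfs_index_unique:
  assumes \<Psi>: "\<Psi> \<in> AutI_typ S F L" and i: "i \<le> k" and j: "j \<le> k" and j': "j' \<le> k"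
    and a: "P j \<in> nfs_conj S F (fst \<Psi> (P i))" and b: "P j' \<in> nfs_conj S F (fst \<Psi> (P i))"
  shows "j' = j"
proof -
  have "fst \<Psi> (P i) \<in> nfs_conj S F (P j)" by (rule nfs_conj_sym[OF Ob_subgroup[OF obj_member_Ob[OF \<Psi> i]] a])
  then have "P j' \<in> nfs_conj S F (P j)"
    using nfs_conj_trans[OF Ob_subgroup[OF complete_fcfD(2)[OF j]] _ b] by blast
  then show ?thesis using complete_fcfD(3)[OF j j'] by simp
qed

lemma fcf_perm_spec:
  assumes \<Psi>: "\<Psi> \<in> AutI_typ S F L" and i: "i \<in> {1..k}"
  shows "fcf_perm S F P k \<Psi> i \<in> {1..k} \<and> P (fcf_perm S F P k \<Psi> i) \<in> nfs_conj S F (fst \<Psi> (P i))"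
proof -
  interpret isotypical p S F L \<Psi> by (rule isotypicalI[OF \<Psi>])
  have ik: "i \<le> k" using i by simp
  have "F_centric S F (obj (P i)) \<and> F_radical p S F (obj (P i))"
    using complete_fcf_obj[OF cf] ik unfolding complete_fcf_def by blast
  then obtain j where j: "j \<le> k" and Pj: "P j \<in> nfs_conj S F (obj (P i))" using complete_fcfD(4) by blast
  have "(THE j. j \<le> k \<and> P j \<in> nfs_conj S F (obj (P i))) = j"
    by (rule the_equality) (use j Pj nfs_index_unique[OF \<Psi> ik j] in blast)+
  moreover have "j \<noteq> 0"
  proof
    assume "j = 0"
    then have "obj (P 0) \<in> nfs_conj S F (obj (P i))" using Pj complete_fcfD(1) obj_carrier by simp
    then have "P 0 \<in> nfs_conj S F (P i)" using nfs_conj_obj_iff complete_fcfD(2) ik by blast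
    then show False using complete_fcfD(3)[OF ik, of 0] i by simp
  qed
  ultimately show ?thesis using j Pj i by (simp add: fcf_perm_def)
qed

lemma fcf_perm_eq:
  assumes \<Psi>: "\<Psi> \<in> AutI_typ S F L" and i: "i \<in> {1..k}" and j: "j \<le> k"
    and Pj: "P j \<in> nfs_conj S F (fst \<Psi> (P i))"
  shows "fcf_perm S F P k \<Psi> i = j"
  using nfs_index_unique[OF \<Psi> _ _ j _ Pj] fcf_perm_spec[OF \<Psi> i] i by auto

lemma fcf_perm_permutes:
  assumes \<Psi>: "\<Psi> \<in> AutI_typ S F L"
  shows "fcf_perm S F P k \<Psi> permutes {1..k}"
proof (rule inj_imp_permutes)
  interpret isotypical p S F L \<Psi> by (rule isotypicalI[OF \<Psi>])
  show "inj_on (fcf_perm S F P k \<Psi>) {1..k}"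
  proof (rule inj_onI)
    fix i i' assume i: "i \<in> {1..k}" and i': "i' \<in> {1..k}"
      and e: "fcf_perm S F P k \<Psi> i = fcf_perm S F P k \<Psi> i'"
    have ik: "i \<le> k" and i'k: "i' \<le> k" using i i' by auto
    let ?j = "fcf_perm S F P k \<Psi> i"
    have a: "P ?j \<in> nfs_conj S F (obj (P i))" using fcf_perm_spec[OF \<Psi> i] by blast
    have b: "P ?j \<in> nfs_conj S F (obj (P i'))" using fcf_perm_spec[OF \<Psi> i'] e by simp
    have "obj (P i') \<in> nfs_conj S F (P ?j)" by (rule nfs_conj_sym[OF Ob_subgroup[OF obj_member_Ob[OF \<Psi> i'k]] b])
    then have "obj (P i') \<in> nfs_conj S F (obj (P i))"
      by (rule nfs_conj_trans[OF Ob_subgroup[OF obj_member_Ob[OF \<Psi> ik]] a])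
    then have "P i' \<in> nfs_conj S F (P i)" using nfs_conj_obj_iff complete_fcfD(2) ik i'k by blast
    then show "i = i'" using complete_fcfD(3)[OF ik i'k] by simp
  qed
  show "\<And>x. x \<in> {1..k} \<Longrightarrow> fcf_perm S F P k \<Psi> x \<in> {1..k}" using fcf_perm_spec[OF \<Psi>] by blast
  show "\<And>x. x \<notin> {1..k} \<Longrightarrow> fcf_perm S F P k \<Psi> x = x" by (rule fcf_perm_outside)
qed simp

lemma fcf_perm_nat_iso:
  assumes \<Theta>: "\<Theta> \<in> AutI_typ S F L" and \<Psi>: "\<Psi> \<in> AutI_typ S F L" and ni: "nat_iso Ob L \<Theta> \<Psi>"
  shows "fcf_perm S F P k \<Theta> = fcf_perm S F P k \<Psi>"
proof
  fix i
  show "fcf_perm S F P k \<Theta> i = fcf_perm S F P k \<Psi> i"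
  proof (cases "i \<in> {1..k}")
    case True
    then have ik: "i \<le> k" by simp
    have a: "P (fcf_perm S F P k \<Psi> i) \<in> nfs_conj S F (fst \<Psi> (P i))" and jk: "fcf_perm S F P k \<Psi> i \<le> k"
      using fcf_perm_spec[OF \<Psi> True] by auto
    have "fst \<Psi> (P i) \<in> nfs_conj S F (fst \<Theta> (P i))"
      by (rule nat_iso_nfs_conj[OF \<Theta> \<Psi> ni complete_fcfD(2)[OF ik]])
    then have "P (fcf_perm S F P k \<Psi> i) \<in> nfs_conj S F (fst \<Theta> (P i))"
      using nfs_conj_trans[OF Ob_subgroup[OF obj_member_Ob[OF \<Theta> ik]] _ a] by blast
    then show ?thesis by (rule fcf_perm_eq[OF \<Theta> True jk])
  qed (simp add: fcf_perm_outside)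
qed

lemma fcf_perm_fcomp:
  assumes \<Psi>: "\<Psi> \<in> AutI_typ S F L" and \<Phi>: "\<Phi> \<in> AutI_typ S F L"
  shows "fcf_perm S F P k (fcomp \<Psi> \<Phi>) = fcf_perm S F P k \<Psi> \<circ> fcf_perm S F P k \<Phi>"
proof
  interpret isotypical p S F L \<Psi> by (rule isotypicalI[OF \<Psi>])
  fix i
  show "fcf_perm S F P k (fcomp \<Psi> \<Phi>) i = (fcf_perm S F P k \<Psi> \<circ> fcf_perm S F P k \<Phi>) i"
  proof (cases "i \<in> {1..k}")
    case True
    then have ik: "i \<le> k" by simp
    let ?j = "fcf_perm S F P k \<Phi> i"
    have j: "?j \<in> {1..k}" and a: "P ?j \<in> nfs_conj S F (fst \<Phi> (P i))" using fcf_perm_spec[OF \<Phi> True] by auto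
    let ?l = "fcf_perm S F P k \<Psi> ?j"
    have l: "?l \<in> {1..k}" and b: "P ?l \<in> nfs_conj S F (obj (P ?j))" using fcf_perm_spec[OF \<Psi> j] by auto
    have X: "fst \<Phi> (P i) \<in> Ob" by (rule obj_member_Ob[OF \<Phi> ik])
    have "obj (P ?j) \<in> nfs_conj S F (obj (fst \<Phi> (P i)))"
      using nfs_conj_obj_iff[OF X complete_fcfD(2)] a j by simp
    then have "P ?l \<in> nfs_conj S F (obj (fst \<Phi> (P i)))"
      using nfs_conj_trans[OF Ob_subgroup[OF obj_Ob[OF X]] _ b] by blast
    then show ?thesis using fcf_perm_eq[OF fcomp_AutI_typ[OF \<Psi> \<Phi>] True] l by (simp add: fst_fcomp)
  qed (simp add: fcf_perm_outside)
qed

lemma fcf_perm_out_class: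
  "\<Psi> \<in> AutI_typ S F L \<Longrightarrow> \<Theta> \<in> out_class S F L \<Psi> \<Longrightarrow> fcf_perm S F P k \<Theta> = fcf_perm S F P k \<Psi>"
  using fcf_perm_nat_iso by (simp add: out_class_def)

lemma out_perm_out_class: "\<Psi> \<in> AutI_typ S F L \<Longrightarrow> out_perm S F P k (out_class S F L \<Psi>) = fcf_perm S F P k \<Psi>"
  unfolding out_perm_def using fcf_perm_out_class out_class_self someI by metis

lemma fcf_perm_Out_typ_mult:
  assumes \<Psi>: "\<Psi> \<in> AutI_typ S F L" and \<Phi>: "\<Phi> \<in> AutI_typ S F L"
    and \<Theta>: "\<Theta> \<in> out_class S F L \<Psi> \<otimes>\<^bsub>Out_typ S F L\<^esub> out_class S F L \<Phi>"
  shows "fcf_perm S F P k \<Theta> = fcf_perm S F P k \<Psi> \<circ> fcf_perm S F P k \<Phi>"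
proof -
  obtain \<Psi>' \<Phi>' where T: "\<Theta> \<in> AutI_typ S F L" and \<Psi>': "\<Psi>' \<in> out_class S F L \<Psi>"
    and \<Phi>': "\<Phi>' \<in> out_class S F L \<Phi>" and ni: "nat_iso Ob L \<Theta> (fcomp \<Psi>' \<Phi>')"
    using \<Theta> by (auto simp: Out_typ_def)
  have A: "\<Psi>' \<in> AutI_typ S F L" and B: "\<Phi>' \<in> AutI_typ S F L" using \<Psi>' \<Phi>' by (auto simp: out_class_def)
  have "fcf_perm S F P k \<Theta> = fcf_perm S F P k (fcomp \<Psi>' \<Phi>')"
    by (rule fcf_perm_nat_iso[OF T fcomp_AutI_typ[OF A B] ni])
  also have "\<dots> = fcf_perm S F P k \<Psi>' \<circ> fcf_perm S F P k \<Phi>'" by (rule fcf_perm_fcomp[OF A B])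
  finally show ?thesis using fcf_perm_out_class[OF \<Psi> \<Psi>'] fcf_perm_out_class[OF \<Phi> \<Phi>'] by simp
qed

lemma out_perm_hom: "out_perm S F P k \<in> hom (Out_typ S F L) (sym_group k)"
proof (rule homI)
  fix A assume "A \<in> carrier (Out_typ S F L)"
  then obtain \<Psi> where \<Psi>: "\<Psi> \<in> AutI_typ S F L" and A: "A = out_class S F L \<Psi>" by (auto simp: Out_typ_def)
  show "out_perm S F P k A \<in> carrier (sym_group k)"
    using out_perm_out_class[OF \<Psi>] fcf_perm_permutes[OF \<Psi>] A by (simp add: sym_group_def)
next
  fix A B assume "A \<in> carrier (Out_typ S F L)" and "B \<in> carrier (Out_typ S F L)"
  then obtain \<Psi> \<Phi> where \<Psi>: "\<Psi> \<in> AutI_typ S F L" and A: "A = out_class S F L \<Psi>"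
    and \<Phi>: "\<Phi> \<in> AutI_typ S F L" and B: "B = out_class S F L \<Phi>" by (auto simp: Out_typ_def)
  have "fcomp \<Psi> \<Phi> \<in> {\<Theta> \<in> AutI_typ S F L. \<exists>\<Psi>'\<in>A. \<exists>\<Phi>'\<in>B. nat_iso Ob L \<Theta> (fcomp \<Psi>' \<Phi>')}"
    using fcomp_AutI_typ[OF \<Psi> \<Phi>] nat_iso_refl[OF fcomp_AutI_typ[OF \<Psi> \<Phi>]]
      out_class_self[OF \<Psi>] out_class_self[OF \<Phi>] A B by blast
  then have "fcomp \<Psi> \<Phi> \<in> A \<otimes>\<^bsub>Out_typ S F L\<^esub> B" by (simp add: Out_typ_def)
  then have "(SOME \<Theta>. \<Theta> \<in> A \<otimes>\<^bsub>Out_typ S F L\<^esub> B) \<in> A \<otimes>\<^bsub>Out_typ S F L\<^esub> B" by (rule someI)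
  then show "out_perm S F P k (A \<otimes>\<^bsub>Out_typ S F L\<^esub> B) = out_perm S F P k A \<otimes>\<^bsub>sym_group k\<^esub> out_perm S F P k B"
    unfolding out_perm_def[of S F P k "A \<otimes>\<^bsub>Out_typ S F L\<^esub> B"]
    using fcf_perm_Out_typ_mult[OF \<Psi> \<Phi>] out_perm_out_class[OF \<Psi>] out_perm_out_class[OF \<Phi>] A B
    by (simp add: sym_group_def)
qed

end

end

theorem lemma3p5:
  fixes p :: nat and S :: "'g monoid" and F :: "'g set \<Rightarrow> 'g set \<Rightarrow> ('g \<Rightarrow> 'g) set"
    and L :: "('g, 'm) lsys" and P :: "nat \<Rightarrow> 'g set" and k :: nat
  assumes "p_local_compact_group p S F L"
    and "complete_fcf p S F P k"
  shows "(\<forall>\<Psi>\<in>AutI_typ S F L. complete_fcf p S F (\<lambda>i. fst \<Psi> (P i)) k) \<and>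
         (\<exists>\<upsilon>. \<upsilon> \<in> hom (Out_typ S F L) (sym_group k) \<and>
              (\<forall>\<Psi>\<in>AutI_typ S F L. \<forall>i\<in>{1..k}.
                  P (\<upsilon> (out_class S F L \<Psi>) i) \<in> nfs_conj S F (fst \<Psi> (P i))))"
proof -
  interpret plcg p S F L by (rule complete_fcf_plcg[OF assms])
  have "complete_fcf p S F (\<lambda>i. fst \<Psi> (P i)) k" if "\<Psi> \<in> AutI_typ S F L" for \<Psi>
    using isotypical.complete_fcf_obj[OF isotypicalI[OF that] assms(2)] .
  moreover have "P (out_perm S F P k (out_class S F L \<Psi>) i) \<in> nfs_conj S F (fst \<Psi> (P i))"
    if "\<Psi> \<in> AutI_typ S F L" "i \<in> {1..k}" for \<Psi> i
    using out_perm_out_class[OF assms(2) that(1)] fcf_perm_spec[OF assms(2) that] by simp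
  ultimately show ?thesis using out_perm_hom[OF assms(2)] by blast
qed

end
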